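(* Let $\beta,\delta\in(0,1)$, $K>0$, $T>0$, and consider the controlled system $$f'=\tfrac12 fm\beta L-\delta f-\eta_1(t)f,\qquad m'=\tfrac12 fm\beta L-\delta m-\eta_2(t)m,\qquad L=1-\frac{f+m}{K},$$ with initial conditions $f(t_0)=f_0$, $m(t_0)=m_0$. The admissible set is $U_4=\{(\eta_1,\eta_2)$ measurable, $0\le\eta_1,\eta_2\le1\}$ and the objective is $J_4=\int_0^T\big(-(f+m)-\tfrac12(\eta_1^2+\eta_2^2)\big)dt$. An optimal control $(\eta_1^*,\eta_2^* )\in U_4$ maximizing $J_4$ is characterized by $$\eta_1^*(t)=\min(1,\max(0,-f\lambda_1)),\qquad \eta_2^*(t)=\min(1,\max(0,-m\lambda_2)).$$ Here $(f,m)$ is the corresponding state and $(\lambda_1,\lambda_2)$ solves $$\lambda_1'=1-\lambda_1\Big[\tfrac{m\beta}{2}L-\tfrac{fm\beta}{2K}-\delta-\eta_1\Big]-\lambda_2\Big[\tfrac{m\beta}{2}L-\tfrac{fm\beta}{2K}\Big],$$ $$\lambda_2'=1-\lambda_1\Big[\tfrac{f\beta}{2}L-\tfrac{fm\beta}{2K}\Big]-\lambda_2\Big[\tfrac{f\beta}{2}L-\tfrac{fm\beta}{2K}-\delta-\eta_2\Big],$$ with $\lambda_1(T)=\lambda_2(T)=0$.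
   Context: $f,m$ are female and male densities, and $\eta_1,\eta_2$ are female and male harvesting rates. The characterization is the necessary condition from Pontryagin's maximum principle with Hamiltonian $H_4=-(f+m)-\tfrac12(\eta_1^2+\eta_2^2)+\lambda_1f'+\lambda_2m'$. *)

theory Defs
  imports "HOL-Analysis.Analysis"
begin

definition Lfac :: "real \<Rightarrow> real \<Rightarrow> real \<Rightarrow> real" where
  "Lfac K f m = 1 - (f + m) / K"

definition rhs_f :: "real \<Rightarrow> real \<Rightarrow> real \<Rightarrow> real \<Rightarrow> real \<Rightarrow> real \<Rightarrow> real" where
  "rhs_f \<beta> \<delta> K e1 f m = f * m * \<beta> * Lfac K f m / 2 - \<delta> * f - e1 * f"

definition rhs_m :: "real \<Rightarrow> real \<Rightarrow> real \<Rightarrow> real \<Rightarrow> real \<Rightarrow> real \<Rightarrow> real" where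
  "rhs_m \<beta> \<delta> K e2 f m = f * m * \<beta> * Lfac K f m / 2 - \<delta> * m - e2 * m"

definition admissible :: "real \<Rightarrow> (real \<Rightarrow> real) \<Rightarrow> bool" where
  "admissible T \<eta> \<longleftrightarrow> set_borel_measurable lebesgue {0..T} \<eta> \<and>
     (\<forall>t\<in>{0..T}. 0 \<le> \<eta> t \<and> \<eta> t \<le> 1)"

text \<open>(f,m) is a (Caratheodory) solution of the state system on [0,T] with
  f(0)=f0, m(0)=m0 under the controls eta1, eta2.\<close>
definition is_state :: "real \<Rightarrow> real \<Rightarrow> real \<Rightarrow> real \<Rightarrow> real \<Rightarrow> real \<Rightarrow>
    (real \<Rightarrow> real) \<Rightarrow> (real \<Rightarrow> real) \<Rightarrow> (real \<Rightarrow> real) \<Rightarrow> (real \<Rightarrow> real) \<Rightarrow> bool" where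
  "is_state \<beta> \<delta> K T f0 m0 \<eta>1 \<eta>2 f m \<longleftrightarrow>
     continuous_on {0..T} f \<and> continuous_on {0..T} m \<and>
     (\<forall>t\<in>{0..T}. ((\<lambda>s. rhs_f \<beta> \<delta> K (\<eta>1 s) (f s) (m s)) has_integral (f t - f0)) {0..t}) \<and>
     (\<forall>t\<in>{0..T}. ((\<lambda>s. rhs_m \<beta> \<delta> K (\<eta>2 s) (f s) (m s)) has_integral (m t - m0)) {0..t})"

definition J4 :: "real \<Rightarrow> (real \<Rightarrow> real) \<Rightarrow> (real \<Rightarrow> real) \<Rightarrow> (real \<Rightarrow> real) \<Rightarrow> (real \<Rightarrow> real) \<Rightarrow> real" where
  "J4 T \<eta>1 \<eta>2 f m = integral {0..T} (\<lambda>t. - (f t + m t) - ((\<eta>1 t)\<^sup>2 + (\<eta>2 t)\<^sup>2) / 2)"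

text \<open>Right-hand sides of the adjoint equations (lambda' = - dH/d state).\<close>
definition adj1 :: "real \<Rightarrow> real \<Rightarrow> real \<Rightarrow> real \<Rightarrow> real \<Rightarrow> real \<Rightarrow> real \<Rightarrow> real \<Rightarrow> real" where
  "adj1 \<beta> \<delta> K e1 f m l1 l2 =
     1 - l1 * (m * \<beta> / 2 * Lfac K f m - f * m * \<beta> / (2 * K) - \<delta> - e1)
       - l2 * (m * \<beta> / 2 * Lfac K f m - f * m * \<beta> / (2 * K))"

definition adj2 :: "real \<Rightarrow> real \<Rightarrow> real \<Rightarrow> real \<Rightarrow> real \<Rightarrow> real \<Rightarrow> real \<Rightarrow> real \<Rightarrow> real" where
  "adj2 \<beta> \<delta> K e2 f m l1 l2 =
     1 - l1 * (f * \<beta> / 2 * Lfac K f m - f * m * \<beta> / (2 * K))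
       - l2 * (f * \<beta> / 2 * Lfac K f m - f * m * \<beta> / (2 * K) - \<delta> - e2)"

end

theory Submission
  imports Defs
begin

text \<open>The adjoint system is a linear backward integral equation; it is solved by Picard iteration
  in a sup norm with Bielecki weight.  For the optimality condition, move the optimal controls a
  step \<open>\<epsilon>\<close> towards their projections \<open>min 1 (max 0 (- f \<lambda>))\<close>.  The state then moves by
  \<open>O(\<epsilon>)\<close>, and pairing the state difference with the adjoint equations (integration by parts, via
  Fubini) cancels all first-order state terms.  Since the Hamiltonian is concave in the control
  and the projections are its maximisers, the payoff increases by at least \<open>\<epsilon> / 2\<close> times the
  integral of the squared distance between the controls and their projections, minus \<open>O(\<epsilon>\<^sup>2)\<close>.
  Optimality forces this integral to vanish, so the controls agree with the projections almost
  everywhere.\<close>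

lemma abs_mult_le:
  fixes x y :: "'a::linordered_idom"
  shows "\<bar>x\<bar> \<le> X \<Longrightarrow> \<bar>y\<bar> \<le> Y \<Longrightarrow> \<bar>x * y\<bar> \<le> X * Y"
  by (simp add: abs_mult) (rule mult_mono, auto intro: order_trans[OF abs_ge_zero])

lemma abs_mult_diff_le:
  fixes x y x' y' :: real
  assumes "\<bar>x\<bar> \<le> X" "\<bar>y'\<bar> \<le> Y"
  shows "\<bar>x * y - x' * y'\<bar> \<le> X * \<bar>y - y'\<bar> + Y * \<bar>x - x'\<bar>"
proof -
  have "x * y - x' * y' = x * (y - y') + y' * (x - x')" by (simp add: algebra_simps)
  also have "\<bar>\<dots>\<bar> \<le> \<bar>x * (y - y')\<bar> + \<bar>y' * (x - x')\<bar>" by (rule abs_triangle_ineq)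
  also have "\<dots> \<le> X * \<bar>y - y'\<bar> + Y * \<bar>x - x'\<bar>"
    using assms by (intro add_mono abs_mult_le) auto
  finally show ?thesis .
qed

lemma le_0_if_le_mult_small:
  fixes I C e0 :: real
  assumes "0 < e0" "0 \<le> C" and le: "\<And>\<epsilon>. 0 < \<epsilon> \<Longrightarrow> \<epsilon> \<le> e0 \<Longrightarrow> I \<le> C * \<epsilon>"
  shows "I \<le> 0"
proof (rule field_le_epsilon)
  fix e :: real assume "0 < e"
  define \<epsilon> where "\<epsilon> = min e0 (e / (C + 1))"
  have "I \<le> C * \<epsilon>"
    using assms \<open>0 < e\<close> by (intro le) (auto simp: \<epsilon>_def)
  also have "\<dots> \<le> (C + 1) * (e / (C + 1))"
    using assms \<open>0 < e\<close> by (intro mult_mono) (auto simp: \<epsilon>_def)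
  finally show "I \<le> 0 + e"
    using \<open>0 \<le> C\<close> by simp
qed

text \<open>The variational inequality characterising \<open>min 1 (max 0 w)\<close> as the projection of \<open>w\<close>
  onto \<open>[0, 1]\<close>.\<close>
lemma projection_unit_interval_ineq:
  fixes w a :: real
  assumes "0 \<le> a" "a \<le> 1"
  shows "(min 1 (max 0 w) - a)\<^sup>2 \<le> (w - a) * (min 1 (max 0 w) - a)"
proof -
  consider "w \<le> 0" | "0 < w" "w \<le> 1" | "1 < w" by linarith
  then show ?thesis
  proof cases
    case 1
    then have "a * a \<le> (a - w) * a" using assms by (intro mult_right_mono) auto
    with 1 show ?thesis by (simp add: power2_eq_square algebra_simps)
  next
    case 3
    then have "(1 - a) * (1 - a) \<le> (w - a) * (1 - a)" using assms by (intro mult_right_mono) auto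
    with 3 show ?thesis by (simp add: power2_eq_square)
  qed (simp add: power2_eq_square)
qed

lemma convex_comb_in_unit_interval:
  fixes a b e :: real
  assumes "0 \<le> a" "a \<le> 1" "0 \<le> b" "b \<le> 1" "0 \<le> e" "e \<le> 1"
  shows "0 \<le> a + e * (b - a) \<and> a + e * (b - a) \<le> 1"
proof -
  have "a + e * (b - a) = (1 - e) * a + e * b" by (simp add: algebra_simps)
  moreover have "(1 - e) * a + e * b \<le> (1 - e) * 1 + e * 1"
    using assms by (intro add_mono mult_left_mono) auto
  ultimately show ?thesis using assms by simp
qed

section \<open>Integral equations with Lipschitz right-hand side\<close>

lemma has_integral_exp_scaled:
  fixes c \<tau> :: real
  assumes "c \<noteq> 0" "0 \<le> \<tau>"
  shows "((\<lambda>s. exp (c * s)) has_integral (exp (c * \<tau>) - 1) / c) {0..\<tau>}"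
proof -
  have "((\<lambda>s. exp (c * s)) has_integral exp (c * \<tau>) / c - exp (c * 0) / c) {0..\<tau>}"
  proof (rule fundamental_theorem_of_calculus)
    fix x assume "x \<in> {0..\<tau>}"
    show "((\<lambda>s. exp (c * s) / c) has_vector_derivative exp (c * x)) (at x within {0..\<tau>})"
      using assms by (auto intro!: derivative_eq_intros simp flip: has_real_derivative_iff_has_vector_derivative)
  qed (use assms in auto)
  then show ?thesis
    by (simp add: diff_divide_distrib)
qed

lemma clamp_real_in_interval: "0 \<le> T \<Longrightarrow> clamp 0 T (t::real) \<in> {0..T}"
  using clamp_in_interval[of 0 T t] by simp

text \<open>Bielecki's trick: in the variable \<open>u t = exp (- c * t) * x t\<close> the Picard operator of
  \<open>x' = G t x\<close> contracts the sup norm by the factor \<open>Lc / c\<close>, where \<open>Lc\<close> is the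
  Lipschitz constant of \<open>G\<close>.\<close>
definition picard_weighted ::
    "(real \<Rightarrow> 'a::euclidean_space \<Rightarrow> 'a) \<Rightarrow> 'a \<Rightarrow> real \<Rightarrow> (real \<Rightarrow> 'a) \<Rightarrow> real \<Rightarrow> 'a" where
  "picard_weighted G x0 c u \<tau> = exp (- c * \<tau>) *\<^sub>R (x0 + integral {0..\<tau>} (\<lambda>s. G s (exp (c * s) *\<^sub>R u s)))"

lemma continuous_on_picard_weighted:
  assumes integrable: "\<And>x. continuous_on {0..T} x \<Longrightarrow> (\<lambda>s. G s (x s)) integrable_on {0..T}"
    and u: "continuous_on {0..T} u"
  shows "continuous_on {0..T} (picard_weighted G x0 c u)"
proof -
  have "(\<lambda>s. G s (exp (c * s) *\<^sub>R u s)) integrable_on {0..T}"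
    by (rule integrable) (intro continuous_intros u)
  then have "continuous_on {0..T} (\<lambda>\<tau>. integral {0..\<tau>} (\<lambda>s. G s (exp (c * s) *\<^sub>R u s)))"
    by (rule indefinite_integral_continuous_1)
  then show ?thesis
    unfolding picard_weighted_def by (intro continuous_intros)
qed

lemma picard_weighted_dist_le:
  assumes lipschitz: "\<And>t x y. t \<in> {0..T} \<Longrightarrow> norm (G t x - G t y) \<le> Lc * norm (x - y)"
    and "0 \<le> Lc" "0 < c"
    and integrable: "\<And>x. continuous_on {0..T} x \<Longrightarrow> (\<lambda>s. G s (x s)) integrable_on {0..T}"
    and u: "continuous_on {0..T} u" and v: "continuous_on {0..T} v"
    and D: "\<And>s. s \<in> {0..T} \<Longrightarrow> norm (u s - v s) \<le> D"
    and \<tau>: "\<tau> \<in> {0..T}"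
  shows "norm (picard_weighted G x0 c u \<tau> - picard_weighted G x0 c v \<tau>) \<le> Lc / c * D"
proof -
  define gu where "gu s = G s (exp (c * s) *\<^sub>R u s)" for s
  define gv where "gv s = G s (exp (c * s) *\<^sub>R v s)" for s
  have "0 \<le> D"
    using D[of 0] \<tau> by (auto intro: order_trans[OF norm_ge_zero])
  have gu: "gu integrable_on {0..\<tau>}" and gv: "gv integrable_on {0..\<tau>}"
    unfolding gu_def gv_def using \<tau>
    by (auto intro!: integrable_on_subinterval[OF integrable] continuous_intros u v)
  have exp_int: "((\<lambda>s. Lc * D * exp (c * s)) has_integral Lc * D * ((exp (c * \<tau>) - 1) / c)) {0..\<tau>}"
    using has_integral_exp_scaled[of c \<tau>] \<open>0 < c\<close> \<tau> by (intro has_integral_mult_right) auto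
  have "norm (integral {0..\<tau>} (\<lambda>s. gu s - gv s)) \<le> integral {0..\<tau>} (\<lambda>s. Lc * D * exp (c * s))"
  proof (rule integral_norm_bound_integral)
    fix s assume "s \<in> {0..\<tau>}"
    then have s: "s \<in> {0..T}" using \<tau> by auto
    have "norm (gu s - gv s) \<le> Lc * norm (exp (c * s) *\<^sub>R u s - exp (c * s) *\<^sub>R v s)"
      unfolding gu_def gv_def using lipschitz s by blast
    also have "\<dots> = Lc * (exp (c * s) * norm (u s - v s))"
      by (simp flip: scaleR_diff_right)
    also have "\<dots> \<le> Lc * (exp (c * s) * D)"
      using D[OF s] \<open>0 \<le> Lc\<close> by (intro mult_left_mono) auto
    finally show "norm (gu s - gv s) \<le> Lc * D * exp (c * s)"
      by (simp add: algebra_simps)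
  qed (use gu gv exp_int in \<open>auto intro: integrable_diff\<close>)
  also have "\<dots> = Lc * D * ((exp (c * \<tau>) - 1) / c)"
    using exp_int by (rule integral_unique)
  finally have bound: "norm (integral {0..\<tau>} (\<lambda>s. gu s - gv s)) \<le> Lc * D * ((exp (c * \<tau>) - 1) / c)" .
  have "norm (picard_weighted G x0 c u \<tau> - picard_weighted G x0 c v \<tau>)
      = exp (- c * \<tau>) * norm (integral {0..\<tau>} (\<lambda>s. gu s - gv s))"
    unfolding picard_weighted_def integral_diff[OF gu gv, unfolded gu_def gv_def] gu_def gv_def
    by (simp flip: scaleR_diff_right)
  also have "\<dots> \<le> exp (- c * \<tau>) * (Lc * D * ((exp (c * \<tau>) - 1) / c))"
    using bound by (intro mult_left_mono) auto
  also have "\<dots> = Lc * D / c * (1 - exp (- c * \<tau>))"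
    by (simp add: field_simps exp_minus)
  also have "\<dots> \<le> Lc * D / c"
    using \<open>0 \<le> Lc\<close> \<open>0 \<le> D\<close> \<open>0 < c\<close> by (intro mult_left_le) auto
  finally show ?thesis by simp
qed

lemma integral_equation_exists:
  fixes G :: "real \<Rightarrow> 'a::euclidean_space \<Rightarrow> 'a"
  assumes lipschitz: "\<And>t x y. t \<in> {0..T} \<Longrightarrow> norm (G t x - G t y) \<le> Lc * norm (x - y)"
    and "0 \<le> Lc" "0 \<le> T"
    and integrable: "\<And>x. continuous_on {0..T} x \<Longrightarrow> (\<lambda>s. G s (x s)) integrable_on {0..T}"
  obtains x where "continuous_on {0..T} x"
    and "\<And>t. t \<in> {0..T} \<Longrightarrow> ((\<lambda>s. G s (x s)) has_integral (x t - x0)) {0..t}"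
proof -
  define c where "c = 2 * Lc + 1"
  have "0 < c" using \<open>0 \<le> Lc\<close> by (simp add: c_def)
  have cont: "continuous_on {0..T} (picard_weighted G x0 c u)" if "continuous_on {0..T} u" for u
    using integrable that by (rule continuous_on_picard_weighted)
  have "\<exists>g::real \<Rightarrow>\<^sub>C 'a. \<forall>t. g t = picard_weighted G x0 c (apply_bcontfun u) (clamp 0 T t)"
    for u :: "real \<Rightarrow>\<^sub>C 'a"
    using continuous_on_cbox_bcontfunE[where a=0 and b=T and f="picard_weighted G x0 c u"]
      cont[of u] by (simp add: continuous_on_subset) blast
  then obtain \<Psi> :: "(real \<Rightarrow>\<^sub>C 'a) \<Rightarrow> (real \<Rightarrow>\<^sub>C 'a)"
    where \<Psi>: "\<And>u t. \<Psi> u t = picard_weighted G x0 c u (clamp 0 T t)"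
    by metis
  have "dist (\<Psi> u) (\<Psi> v) \<le> 1/2 * dist u v" for u v
  proof (rule dist_bound)
    fix t
    have "norm (\<Psi> u t - \<Psi> v t) \<le> Lc / c * dist u v"
      unfolding \<Psi>
      by (rule picard_weighted_dist_le[where G=G and Lc=Lc and T=T])
        (use lipschitz \<open>0 \<le> Lc\<close> \<open>0 < c\<close> integrable clamp_real_in_interval[OF \<open>0 \<le> T\<close>] in
          \<open>auto simp: dist_norm[symmetric] dist_bounded continuous_on_subset\<close>)
    also have "\<dots> \<le> 1/2 * dist u v"
      using \<open>0 \<le> Lc\<close> by (intro mult_right_mono) (auto simp: c_def field_simps)
    finally show "dist (\<Psi> u t) (\<Psi> v t) \<le> 1/2 * dist u v"
      by (simp add: dist_norm)
  qed
  then obtain u where "\<Psi> u = u"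
    using banach_fix_type[of "1/2" \<Psi>] by auto
  then have u: "u t = picard_weighted G x0 c u (clamp 0 T t)" for t
    using \<Psi> by metis
  define x where "x s = exp (c * s) *\<^sub>R u s" for s
  have x: "continuous_on {0..T} x"
    unfolding x_def by (intro continuous_intros) auto
  have "((\<lambda>s. G s (x s)) has_integral (x t - x0)) {0..t}" if t: "t \<in> {0..T}" for t
  proof -
    have "(\<lambda>s. G s (x s)) integrable_on {0..t}"
      using t by (intro integrable_on_subinterval[OF integrable[OF x]]) auto
    moreover have "x t = x0 + integral {0..t} (\<lambda>s. G s (x s))"
      using u[of t] t by (simp add: x_def picard_weighted_def exp_minus field_simps flip: exp_add)
    ultimately show ?thesis
      by (simp add: has_integral_integral)
  qed
  with x show ?thesis by (rule that)
qed

lemma integral_equation_difference_le: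
  fixes G G0 :: "real \<Rightarrow> 'a::euclidean_space \<Rightarrow> 'a"
  assumes lipschitz: "\<And>s x y. s \<in> {0..\<tau>} \<Longrightarrow> norm (G s x - G s y) \<le> Lc * norm (x - y)"
    and "0 \<le> Lc" "0 < c" "0 \<le> \<tau>"
    and x: "((\<lambda>s. G s (x s)) has_integral (x \<tau> - x0)) {0..\<tau>}"
    and y: "((\<lambda>s. G0 s (y s)) has_integral (y \<tau> - x0)) {0..\<tau>}"
    and close: "\<And>s z. s \<in> {0..\<tau>} \<Longrightarrow> norm (G s z - G0 s z) \<le> \<epsilon>"
    and xy: "\<And>s. s \<in> {0..\<tau>} \<Longrightarrow> norm (x s - y s) \<le> D * exp (c * s)"
  shows "norm (x \<tau> - y \<tau>) \<le> Lc * D * ((exp (c * \<tau>) - 1) / c) + \<epsilon> * \<tau>"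
proof -
  have gx: "(\<lambda>s. G s (x s)) integrable_on {0..\<tau>}" and gy: "(\<lambda>s. G0 s (y s)) integrable_on {0..\<tau>}"
    using x y by blast+
  have "x \<tau> - y \<tau> = integral {0..\<tau>} (\<lambda>s. G s (x s) - G0 s (y s))"
    using integral_unique[OF x] integral_unique[OF y] integral_diff[OF gx gy] by simp
  have bound_int: "((\<lambda>s. Lc * D * exp (c * s) + \<epsilon>) has_integral Lc * D * ((exp (c * \<tau>) - 1) / c) + \<epsilon> * \<tau>) {0..\<tau>}"
    using has_integral_exp_scaled[of c \<tau>] \<open>0 < c\<close> \<open>0 \<le> \<tau>\<close> has_integral_const_real[of \<epsilon> 0 \<tau>]
    by (intro has_integral_add has_integral_mult_right) (auto simp: mult.commute)
  have "norm (x \<tau> - y \<tau>) \<le> integral {0..\<tau>} (\<lambda>s. Lc * D * exp (c * s) + \<epsilon>)"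
    unfolding \<open>x \<tau> - y \<tau> = _\<close>
  proof (rule integral_norm_bound_integral)
    fix s assume s: "s \<in> {0..\<tau>}"
    have "norm (G s (x s) - G0 s (y s)) \<le> norm (G s (x s) - G s (y s)) + norm (G s (y s) - G0 s (y s))"
      using norm_triangle_ineq[of "G s (x s) - G s (y s)" "G s (y s) - G0 s (y s)"] by simp
    also have "\<dots> \<le> Lc * (D * exp (c * s)) + \<epsilon>"
      using lipschitz[OF s, of "x s" "y s"] close[OF s, of "y s"] mult_left_mono[OF xy[OF s] \<open>0 \<le> Lc\<close>]
      by linarith
    finally show "norm (G s (x s) - G0 s (y s)) \<le> Lc * D * exp (c * s) + \<epsilon>"
      by (simp add: mult_ac)
  qed (use gx gy bound_int in \<open>auto intro: integrable_diff\<close>)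
  also have "\<dots> = Lc * D * ((exp (c * \<tau>) - 1) / c) + \<epsilon> * \<tau>"
    using bound_int by (rule integral_unique)
  finally show ?thesis .
qed

text \<open>A Gronwall-type estimate, proved by applying the previous lemma with \<open>D\<close> the maximum of
  \<open>exp (- c * t) * norm (x t - y t)\<close> on \<open>[0, T]\<close>.\<close>
lemma integral_equation_stability:
  fixes G G0 :: "real \<Rightarrow> 'a::euclidean_space \<Rightarrow> 'a"
  assumes lipschitz: "\<And>t x y. t \<in> {0..T} \<Longrightarrow> norm (G t x - G t y) \<le> Lc * norm (x - y)"
    and "0 \<le> Lc" "0 \<le> T"
    and x: "continuous_on {0..T} x" "\<And>t. t \<in> {0..T} \<Longrightarrow> ((\<lambda>s. G s (x s)) has_integral (x t - x0)) {0..t}"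
    and y: "continuous_on {0..T} y" "\<And>t. t \<in> {0..T} \<Longrightarrow> ((\<lambda>s. G0 s (y s)) has_integral (y t - x0)) {0..t}"
    and close: "\<And>t z. t \<in> {0..T} \<Longrightarrow> norm (G t z - G0 t z) \<le> \<epsilon>"
    and t: "t \<in> {0..T}"
  shows "norm (x t - y t) \<le> 2 * \<epsilon> * T * exp ((2 * Lc + 1) * T)"
proof -
  define c where "c = 2 * Lc + 1"
  have "0 < c" using \<open>0 \<le> Lc\<close> by (simp add: c_def)
  have "0 \<le> \<epsilon>"
    using close[of 0 0] \<open>0 \<le> T\<close> by (auto intro: order_trans[OF norm_ge_zero])
  define w where "w t = exp (- c * t) * norm (x t - y t)" for t
  have "continuous_on {0..T} w"
    unfolding w_def by (intro continuous_intros x y)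
  then obtain t0 where t0: "t0 \<in> {0..T}" and max: "\<And>t. t \<in> {0..T} \<Longrightarrow> w t \<le> w t0"
    using continuous_attains_sup[of "{0..T}" w] \<open>0 \<le> T\<close> by auto
  define D where "D = w t0"
  have "0 \<le> D" by (simp add: D_def w_def)
  have xy_le: "norm (x s - y s) \<le> D * exp (c * s)" if "s \<in> {0..T}" for s
    using max[OF that] by (simp add: D_def w_def exp_minus field_simps)
  have sub: "s \<in> {0..T}" if "s \<in> {0..t0}" for s
    using that t0 by auto
  have "norm (x t0 - y t0) \<le> Lc * D * ((exp (c * t0) - 1) / c) + \<epsilon> * t0"
    by (rule integral_equation_difference_le[where G=G and G0=G0,
          OF lipschitz[OF sub] \<open>0 \<le> Lc\<close> \<open>0 < c\<close> _ x(2)[OF t0] y(2)[OF t0] close[OF sub] xy_le[OF sub]])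
      (use t0 in auto)
  then have "D \<le> exp (- c * t0) * (Lc * D * ((exp (c * t0) - 1) / c) + \<epsilon> * t0)"
    unfolding D_def w_def by (intro mult_left_mono) auto
  also have "\<dots> = Lc / c * D * (1 - exp (- c * t0)) + \<epsilon> * (t0 * exp (- c * t0))"
  proof -
    have "exp (- c * t0) * exp (c * t0) = 1" by (simp flip: exp_add)
    then show ?thesis by (simp add: field_simps)
  qed
  also have "\<dots> \<le> 1 / 2 * D * 1 + \<epsilon> * (T * 1)"
  proof -
    have "Lc / c \<le> 1 / 2" using \<open>0 \<le> Lc\<close> by (simp add: c_def field_simps)
    then show ?thesis
      using \<open>0 \<le> Lc\<close> \<open>0 \<le> D\<close> \<open>0 < c\<close> \<open>0 \<le> \<epsilon>\<close> t0 mult_nonneg_nonneg[of c t0]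
      by (intro add_mono mult_mono mult_left_mono) auto
  qed
  finally have "D \<le> 2 * \<epsilon> * T"
    by simp
  then have "D * exp (c * t) \<le> 2 * \<epsilon> * T * exp (c * T)"
    using t \<open>0 < c\<close> \<open>0 \<le> D\<close> \<open>0 \<le> \<epsilon>\<close> by (intro mult_mono) auto
  then show ?thesis
    using xy_le[OF t] by (simp add: c_def)
qed

lemma has_integral_reflect_interval:
  fixes f :: "real \<Rightarrow> 'a::euclidean_space"
  assumes "(f has_integral i) {a..b}" "a \<le> b"
  shows "((\<lambda>x. f (c - x)) has_integral i) {c - b..c - a}"
proof -
  have "((\<lambda>x. f ((-1) *\<^sub>R x + c)) has_integral (1 / \<bar>-1\<bar> ^ DIM(real)) *\<^sub>R i)
      ((\<lambda>x. (1 / (-1)) *\<^sub>R x + - ((1 / (-1)) *\<^sub>R c)) ` cbox a b)"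
    by (rule has_integral_affinity) (use assms in auto)
  moreover have "(\<lambda>x. (1 / (-1)) *\<^sub>R x + - ((1 / (-1)) *\<^sub>R c)) ` cbox a b = {c - b..c - a}"
    using assms(2) by (simp add: image_affinity_cbox)
  ultimately show ?thesis by simp
qed

lemma backward_integral_equation_exists:
  fixes A :: "real \<Rightarrow> 'a::euclidean_space \<Rightarrow> 'a"
  assumes lipschitz: "\<And>t x y. t \<in> {0..T} \<Longrightarrow> norm (A t x - A t y) \<le> Lc * norm (x - y)"
    and "0 \<le> Lc" "0 \<le> T"
    and integrable: "\<And>x. continuous_on {0..T} x \<Longrightarrow> (\<lambda>s. A s (x s)) integrable_on {0..T}"
  obtains l where "continuous_on {0..T} l" "l T = 0"
    and "\<And>t. t \<in> {0..T} \<Longrightarrow> ((\<lambda>s. A s (l s)) has_integral (l T - l t)) {t..T}"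
proof -
  define G where "G s y = - A (T - s) y" for s y
  have lipschitz_G: "norm (G t x - G t y) \<le> Lc * norm (x - y)" if "t \<in> {0..T}" for t x y
    using lipschitz[of "T - t" x y] that by (simp add: G_def norm_minus_commute)
  have integrable_G: "(\<lambda>s. G s (y s)) integrable_on {0..T}" if y: "continuous_on {0..T} y" for y
  proof -
    have "continuous_on {0..T} (\<lambda>s. y (T - s))"
      by (rule continuous_on_compose2[OF y]) (auto intro!: continuous_intros)
    then have "((\<lambda>s. A s (y (T - s))) has_integral integral {0..T} (\<lambda>s. A s (y (T - s)))) {0..T}"
      by (intro integrable_integral integrable)
    from has_integral_reflect_interval[OF this \<open>0 \<le> T\<close>, of T]
    have "((\<lambda>s. A (T - s) (y s)) has_integral integral {0..T} (\<lambda>s. A s (y (T - s)))) {0..T}"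
      by simp
    then show ?thesis
      unfolding G_def by (intro integrable_neg) blast
  qed
  obtain y where y: "continuous_on {0..T} y"
    and y_eq: "\<And>t. t \<in> {0..T} \<Longrightarrow> ((\<lambda>s. G s (y s)) has_integral (y t - 0)) {0..t}"
    using integral_equation_exists[where G=G, OF lipschitz_G \<open>0 \<le> Lc\<close> \<open>0 \<le> T\<close> integrable_G]
    by blast
  have "y 0 = integral {0..0} (\<lambda>s. G s (y s))"
    using integral_unique[OF y_eq[of 0]] \<open>0 \<le> T\<close> by simp
  then have "y 0 = 0" by simp
  define l where "l t = y (T - t)" for t
  have "continuous_on {0..T} l"
    unfolding l_def by (rule continuous_on_compose2[OF y]) (auto intro!: continuous_intros)
  moreover have "l T = 0"
    by (simp add: l_def \<open>y 0 = 0\<close>)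
  moreover have "((\<lambda>s. A s (l s)) has_integral (l T - l t)) {t..T}" if t: "t \<in> {0..T}" for t
  proof -
    have "((\<lambda>s. G s (y s)) has_integral y (T - t)) {0..T - t}"
      using y_eq[of "T - t"] t by auto
    from has_integral_reflect_interval[OF this, of T]
    have "((\<lambda>s. - A s (l s)) has_integral l t) {t..T}"
      using t by (simp add: G_def l_def)
    from has_integral_neg[OF this] show ?thesis
      by (simp add: \<open>l T = 0\<close>)
  qed
  ultimately show ?thesis by (rule that)
qed

lemma has_integral_Pair:
  fixes f :: "'n::euclidean_space \<Rightarrow> 'a::real_normed_vector" and g :: "'n \<Rightarrow> 'b::real_normed_vector"
  assumes "(f has_integral a) S" "(g has_integral b) S"
  shows "((\<lambda>x. (f x, g x)) has_integral (a, b)) S"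
proof -
  have fst_part: "((\<lambda>x. (f x, 0)) has_integral (a, 0)) S"
    using has_integral_linear[OF assms(1) bounded_linear_Pair[OF bounded_linear_ident bounded_linear_zero]]
    by (simp add: o_def)
  have snd_part: "((\<lambda>x. (0, g x)) has_integral (0, b)) S"
    using has_integral_linear[OF assms(2) bounded_linear_Pair[OF bounded_linear_zero bounded_linear_ident]]
    by (simp add: o_def)
  from has_integral_add[OF fst_part snd_part] show ?thesis
    by simp
qed

lemma has_integral_fst:
  assumes "(F has_integral I) S"
  shows "((\<lambda>x. fst (F x)) has_integral fst I) S"
  using has_integral_linear[OF assms bounded_linear_fst] by (simp add: o_def)

lemma has_integral_snd:
  assumes "(F has_integral I) S"
  shows "((\<lambda>x. snd (F x)) has_integral snd I) S"
  using has_integral_linear[OF assms bounded_linear_snd] by (simp add: o_def)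

lemma integrable_on_Pair:
  fixes f g :: "'n::euclidean_space \<Rightarrow> real"
  shows "f integrable_on S \<Longrightarrow> g integrable_on S \<Longrightarrow> (\<lambda>x. (f x, g x)) integrable_on S"
  unfolding integrable_on_def by (blast intro: has_integral_Pair)

lemma norm_Pair_le_abs: "norm (x :: real \<times> real) \<le> \<bar>fst x\<bar> + \<bar>snd x\<bar>"
  using norm_Pair_le[of "fst x" "snd x"] by simp

lemma abs_fst_le_norm: "\<bar>fst x\<bar> \<le> norm (x :: real \<times> real)"
  using norm_fst_le[of "fst x" "snd x"] by simp

lemma abs_snd_le_norm: "\<bar>snd x\<bar> \<le> norm (x :: real \<times> real)"
  using norm_snd_le[of "snd x" "fst x"] by simp

section \<open>Bounded measurable functions\<close>

definition bounded_measurable_on :: "real set \<Rightarrow> (real \<Rightarrow> real) \<Rightarrow> bool" where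
  "bounded_measurable_on S f \<longleftrightarrow> f \<in> borel_measurable (lebesgue_on S) \<and> (\<exists>M. \<forall>s\<in>S. \<bar>f s\<bar> \<le> M)"

lemma bounded_measurable_onD:
  assumes "bounded_measurable_on S f"
  shows "f \<in> borel_measurable (lebesgue_on S)" and "\<exists>M. \<forall>s\<in>S. \<bar>f s\<bar> \<le> M"
  using assms unfolding bounded_measurable_on_def by auto

lemma bounded_measurable_on_boundE:
  assumes "bounded_measurable_on S f"
  obtains M where "0 \<le> M" "\<And>s. s \<in> S \<Longrightarrow> \<bar>f s\<bar> \<le> M"
proof -
  obtain M where "\<forall>s\<in>S. \<bar>f s\<bar> \<le> M"
    using assms unfolding bounded_measurable_on_def by blast
  then show ?thesis
    by (intro that[of "max 0 M"]) auto
qed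

lemma bounded_measurable_on_const: "bounded_measurable_on S (\<lambda>s. c)"
  unfolding bounded_measurable_on_def by auto

lemma bounded_measurable_on_continuous:
  assumes "continuous_on {a..b} f"
  shows "bounded_measurable_on {a..b} f"
proof -
  have "bounded (f ` {a..b})"
    by (intro compact_imp_bounded compact_continuous_image assms) simp
  then have "\<exists>M. \<forall>s\<in>{a..b}. \<bar>f s\<bar> \<le> M"
    unfolding bounded_iff by auto
  moreover have "f \<in> borel_measurable (lebesgue_on {a..b})"
    using assms by (rule continuous_imp_measurable_on_sets_lebesgue) simp
  ultimately show ?thesis
    unfolding bounded_measurable_on_def by blast
qed

lemma bounded_measurable_on_add:
  assumes "bounded_measurable_on S f" "bounded_measurable_on S g"
  shows "bounded_measurable_on S (\<lambda>s. f s + g s)"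
proof -
  obtain M N where "\<forall>s\<in>S. \<bar>f s\<bar> \<le> M" "\<forall>s\<in>S. \<bar>g s\<bar> \<le> N"
    using assms unfolding bounded_measurable_on_def by blast
  then have "\<forall>s\<in>S. \<bar>f s + g s\<bar> \<le> M + N"
    by (auto intro: order_trans[OF abs_triangle_ineq] add_mono)
  moreover have "(\<lambda>s. f s + g s) \<in> borel_measurable (lebesgue_on S)"
    using assms[THEN bounded_measurable_onD(1)] by (rule borel_measurable_add)
  ultimately show ?thesis
    unfolding bounded_measurable_on_def by blast
qed

lemma bounded_measurable_on_mult:
  assumes "bounded_measurable_on S f" "bounded_measurable_on S g"
  shows "bounded_measurable_on S (\<lambda>s. f s * g s)"
proof -
  obtain M N where "\<forall>s\<in>S. \<bar>f s\<bar> \<le> M" "\<forall>s\<in>S. \<bar>g s\<bar> \<le> N"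
    using assms unfolding bounded_measurable_on_def by blast
  then have "\<forall>s\<in>S. \<bar>f s * g s\<bar> \<le> M * N"
    by (simp add: abs_mult_le)
  moreover have "(\<lambda>s. f s * g s) \<in> borel_measurable (lebesgue_on S)"
    using assms[THEN bounded_measurable_onD(1)] by (rule borel_measurable_times)
  ultimately show ?thesis
    unfolding bounded_measurable_on_def by blast
qed

lemma bounded_measurable_on_uminus:
  "bounded_measurable_on S f \<Longrightarrow> bounded_measurable_on S (\<lambda>s. - f s)"
  unfolding bounded_measurable_on_def by (simp add: borel_measurable_uminus)

lemma bounded_measurable_on_diff:
  "bounded_measurable_on S f \<Longrightarrow> bounded_measurable_on S g \<Longrightarrow> bounded_measurable_on S (\<lambda>s. f s - g s)"
  using bounded_measurable_on_add[of S f "\<lambda>s. - g s"] bounded_measurable_on_uminus[of S g] by simp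

lemma bounded_measurable_on_divide_const:
  "bounded_measurable_on S f \<Longrightarrow> bounded_measurable_on S (\<lambda>s. f s / c)"
  using bounded_measurable_on_mult[OF _ bounded_measurable_on_const, of S f "1 / c"] by simp

lemma bounded_measurable_on_power2:
  "bounded_measurable_on S f \<Longrightarrow> bounded_measurable_on S (\<lambda>s. (f s)\<^sup>2)"
  using bounded_measurable_on_mult[of S f f] by (simp add: power2_eq_square)

lemmas bounded_measurable_on_intros =
  bounded_measurable_on_const bounded_measurable_on_add bounded_measurable_on_diff
  bounded_measurable_on_mult bounded_measurable_on_divide_const bounded_measurable_on_uminus
  bounded_measurable_on_power2

lemma bounded_measurable_on_integrable:
  assumes "bounded_measurable_on {a..b} f"
  shows "f integrable_on {a..b}"
proof -
  obtain M where "\<forall>s\<in>{a..b}. \<bar>f s\<bar> \<le> M"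
    using assms unfolding bounded_measurable_on_def by blast
  then show ?thesis
    by (intro measurable_bounded_by_integrable_imp_integrable_real[OF bounded_measurable_onD(1)[OF assms],
          where g="\<lambda>_. M"]) auto
qed

lemma bounded_measurable_on_subset:
  "bounded_measurable_on S f \<Longrightarrow> S' \<subseteq> S \<Longrightarrow> bounded_measurable_on S' f"
  unfolding bounded_measurable_on_def by (meson measurable_restrict_mono subsetD)

lemma admissible_iff:
  "admissible T \<eta> \<longleftrightarrow> \<eta> \<in> borel_measurable (lebesgue_on {0..T}) \<and> (\<forall>t\<in>{0..T}. 0 \<le> \<eta> t \<and> \<eta> t \<le> 1)"
  unfolding admissible_def set_borel_measurable_def
  by (subst borel_measurable_restrict_space_iff) auto

lemma admissible_imp_bounded_measurable_on:
  "admissible T \<eta> \<Longrightarrow> bounded_measurable_on {0..T} \<eta>"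
  unfolding admissible_iff bounded_measurable_on_def by (auto intro!: exI[of _ 1])

lemma bounded_measurable_on_extend_by_zero:
  assumes "bounded_measurable_on S f" "S \<in> sets lebesgue"
  shows "(\<lambda>x. if x \<in> S then f x else 0) \<in> borel_measurable lebesgue"
  using assms by (simp add: borel_measurable_if bounded_measurable_on_def)

lemma lebesgue_integral_restrict_eq_integral:
  fixes g :: "real \<Rightarrow> real"
  assumes "bounded_measurable_on {a..b} g"
  shows "(\<integral>x. (if x \<in> {a..b} then g x else 0) \<partial>lebesgue) = integral {a..b} g"
proof -
  obtain M where M: "\<forall>s\<in>{a..b}. \<bar>g s\<bar> \<le> M"
    using assms unfolding bounded_measurable_on_def by blast
  have "(\<lambda>x. if x \<in> {a..b} then g x else 0) \<in> borel_measurable lebesgue"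
    using assms by (rule bounded_measurable_on_extend_by_zero) simp
  then have "integrable lebesgue (\<lambda>x. if x \<in> {a..b} then g x else 0)"
    using M by (intro integrableI_bounded_set[where A="{a..b}" and B=M]) (auto simp: emeasure_lborel_Icc_eq)
  from has_integral_integral_lebesgue[OF this]
  have "(\<integral>x. (if x \<in> {a..b} then g x else 0) \<partial>lebesgue) = integral UNIV (\<lambda>x. if x \<in> {a..b} then g x else 0)"
    by (rule integral_unique[symmetric])
  also have "\<dots> = integral {a..b} g"
    by (rule Henstock_Kurzweil_Integration.integral_restrict_UNIV)
  finally show ?thesis .
qed

lemma AE_eq_0_if_integral_nonpos:
  assumes "bounded_measurable_on {a..b} q" "\<And>t. t \<in> {a..b} \<Longrightarrow> 0 \<le> q t" "integral {a..b} q \<le> 0"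
  shows "AE t in lebesgue. t \<in> {a..b} \<longrightarrow> q t = 0"
proof -
  define Q where "Q x = (if x \<in> {a..b} then q x else 0)" for x
  obtain M where M: "\<forall>s\<in>{a..b}. \<bar>q s\<bar> \<le> M"
    using assms unfolding bounded_measurable_on_def by blast
  have "Q \<in> borel_measurable lebesgue"
    unfolding Q_def using assms(1) by (rule bounded_measurable_on_extend_by_zero) simp
  then have "integrable lebesgue Q"
    using M by (intro integrableI_bounded_set[where A="{a..b}" and B=M]) (auto simp: emeasure_lborel_Icc_eq Q_def)
  moreover have Q_nonneg: "AE x in lebesgue. 0 \<le> Q x"
    by (simp add: Q_def assms(2))
  moreover have "(\<integral>x. Q x \<partial>lebesgue) = 0"
    using integral_nonneg_AE[OF Q_nonneg] assms(3) lebesgue_integral_restrict_eq_integral[OF assms(1)]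
    by (simp add: Q_def)
  ultimately have "AE x in lebesgue. Q x = 0"
    by (simp add: integral_nonneg_eq_0_iff_AE)
  then show ?thesis
    by eventually_elim (metis Q_def)
qed

lemma integral_ge_affine_lower_bound:
  assumes q: "bounded_measurable_on {0..T} q" and "g integrable_on {0..T}" "0 \<le> T"
    and le: "\<And>s. s \<in> {0..T} \<Longrightarrow> a * q s - b \<le> g s"
  shows "a * integral {0..T} q - T * b \<le> integral {0..T} g"
proof -
  from has_integral_diff[OF has_integral_mult_right[where c=a, OF integrable_integral[OF bounded_measurable_on_integrable[OF q]]]
      has_integral_const_real[of b 0 T]]
  have "integral {0..T} (\<lambda>s. a * q s - b) = a * integral {0..T} q - T * b"
    using \<open>0 \<le> T\<close> by (simp add: integral_unique)
  moreover have "(\<lambda>s. a * q s - b) integrable_on {0..T}"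
    by (intro bounded_measurable_on_integrable bounded_measurable_on_diff bounded_measurable_on_mult
        bounded_measurable_on_const q)
  then have "integral {0..T} (\<lambda>s. a * q s - b) \<le> integral {0..T} g"
    using assms(2) le by (rule integral_le)
  ultimately show ?thesis by simp
qed

lemma sigma_finite_lebesgue: "sigma_finite_measure (lebesgue :: 'a::euclidean_space measure)"
proof
  obtain A :: "'a set set" where "countable A" "A \<subseteq> sets lborel" "\<Union>A = space lborel"
      "\<forall>a\<in>A. emeasure lborel a \<noteq> \<infinity>"
    using lborel.sigma_finite_countable by blast
  then show "\<exists>A. countable A \<and> A \<subseteq> sets lebesgue \<and> \<Union> A = space (lebesgue :: 'a measure) \<and>
      (\<forall>a\<in>A. emeasure lebesgue a \<noteq> \<infinity>)"
    by (intro exI[of _ A]) (auto simp: emeasure_completion)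
qed

interpretation lebesgue_pair: pair_sigma_finite "lebesgue :: real measure" "lebesgue :: real measure"
  by (simp add: pair_sigma_finite_def sigma_finite_lebesgue)

lemma integrable_triangle_product:
  fixes A B :: "real \<Rightarrow> real"
  assumes [measurable]: "A \<in> borel_measurable lebesgue" "B \<in> borel_measurable lebesgue"
    and bound: "\<And>s. \<bar>A s\<bar> \<le> MA" "\<And>r. \<bar>B r\<bar> \<le> MB"
    and support: "\<And>s. s \<notin> {0..T} \<Longrightarrow> A s = 0" "\<And>r. r \<notin> {0..T} \<Longrightarrow> B r = 0"
  shows "integrable (lebesgue \<Otimes>\<^sub>M lebesgue) (\<lambda>(s, r). if r \<le> s then A s * B r else 0)"
proof (rule integrableI_bounded_set[where A="{0..T} \<times> {0..T}" and B="MA * MB"])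
  have [measurable]: "(\<lambda>x::real. x) \<in> borel_measurable lebesgue"
    by (rule measurable_completion) simp
  show "(\<lambda>(s, r). if r \<le> s then A s * B r else 0) \<in> borel_measurable (lebesgue \<Otimes>\<^sub>M lebesgue)"
    unfolding case_prod_beta' by measurable
  show "emeasure (lebesgue \<Otimes>\<^sub>M lebesgue) ({0..T} \<times> {0..T::real}) < \<infinity>"
    by (simp add: sigma_finite_measure.emeasure_pair_measure_Times[OF sigma_finite_lebesgue]
        emeasure_lborel_Icc_eq ennreal_mult_less_top)
  show "AE x in lebesgue \<Otimes>\<^sub>M lebesgue. x \<in> {0..T} \<times> {0..T} \<longrightarrow>
      norm ((\<lambda>(s, r). if r \<le> s then A s * B r else 0) x) \<le> MA * MB"
    using abs_mult_le[OF bound(1) bound(2)] order_trans[OF abs_ge_zero bound(1)] order_trans[OF abs_ge_zero bound(2)]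
    by (auto simp: case_prod_beta')
  show "AE x in lebesgue \<Otimes>\<^sub>M lebesgue. x \<notin> {0..T} \<times> {0..T} \<longrightarrow> (\<lambda>(s, r). if r \<le> s then A s * B r else 0) x = 0"
  proof (intro AE_I2 impI)
    fix x :: "real \<times> real" assume "x \<notin> {0..T} \<times> {0..T}"
    then have "A (fst x) * B (snd x) = 0"
      using support by (metis mem_Sigma_iff mult_eq_0_iff prod.collapse)
    then show "(\<lambda>(s, r). if r \<le> s then A s * B r else 0) x = 0"
      by (simp add: case_prod_beta')
  qed
qed simp

text \<open>Fubini on the triangle \<open>0 \<le> r \<le> s \<le> T\<close>; this is integration by parts for the
  primitives of \<open>a\<close> and \<open>b\<close>.\<close>
lemma integral_mult_indefinite_integral_swap:
  assumes a: "bounded_measurable_on {0..T} a" and b: "bounded_measurable_on {0..T} b"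
  shows "integral {0..T} (\<lambda>s. a s * integral {0..s} b) = integral {0..T} (\<lambda>r. b r * integral {r..T} a)"
proof -
  obtain Ma Mb where Ma: "\<forall>s\<in>{0..T}. \<bar>a s\<bar> \<le> Ma" and Mb: "\<forall>s\<in>{0..T}. \<bar>b s\<bar> \<le> Mb"
    using a b unfolding bounded_measurable_on_def by blast
  define A where "A s = (if s \<in> {0..T} then a s else 0)" for s
  define B where "B s = (if s \<in> {0..T} then b s else 0)" for s
  define F where "F s r = (if r \<le> s then A s * B r else 0)" for s r :: real
  have meas: "A \<in> borel_measurable lebesgue" "B \<in> borel_measurable lebesgue"
    unfolding A_def B_def by (simp_all only: bounded_measurable_on_extend_by_zero[OF a]
        bounded_measurable_on_extend_by_zero[OF b] sets_lborel atLeastAtMost_borel sets_completionI_sets)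
  have bnd: "\<bar>A s\<bar> \<le> \<bar>Ma\<bar>" "\<bar>B r\<bar> \<le> \<bar>Mb\<bar>" for s r
    using Ma[rule_format, of s] Mb[rule_format, of r] abs_ge_self[of Ma] abs_ge_self[of Mb]
    by (auto simp: A_def B_def)
  have supp: "\<And>s. s \<notin> {0..T} \<Longrightarrow> A s = 0" "\<And>r. r \<notin> {0..T} \<Longrightarrow> B r = 0"
    unfolding A_def B_def by (metis (full_types))+
  have "integrable (lebesgue \<Otimes>\<^sub>M lebesgue) (case_prod F)"
    unfolding F_def by (rule integrable_triangle_product[OF meas bnd supp])
  then have fubini: "(\<integral>r. (\<integral>s. F s r \<partial>lebesgue) \<partial>lebesgue) = (\<integral>s. (\<integral>r. F s r \<partial>lebesgue) \<partial>lebesgue)"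
    by (rule lebesgue_pair.Fubini_integral)
  have inner_r: "(\<integral>r. F s r \<partial>lebesgue) = (if s \<in> {0..T} then a s * integral {0..s} b else 0)" for s
  proof (cases "s \<in> {0..T}")
    case True
    have "(\<integral>r. F s r \<partial>lebesgue) = a s * (\<integral>r. (if r \<in> {0..s} then b r else 0) \<partial>lebesgue)"
      unfolding F_def integral_mult_right_zero[symmetric]
      using True by (intro Bochner_Integration.integral_cong) (auto simp: A_def B_def)
    also have "(\<integral>r. (if r \<in> {0..s} then b r else 0) \<partial>lebesgue) = integral {0..s} b"
      using True by (intro lebesgue_integral_restrict_eq_integral bounded_measurable_on_subset[OF b]) auto
    finally show ?thesis using True by simp
  next
    case False
    then have "F s = (\<lambda>r. 0)" by (auto simp: F_def A_def fun_eq_iff)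
    with False show ?thesis by auto
  qed
  have inner_s: "(\<integral>s. F s r \<partial>lebesgue) = (if r \<in> {0..T} then b r * integral {r..T} a else 0)" for r
  proof (cases "r \<in> {0..T}")
    case True
    have "(\<integral>s. F s r \<partial>lebesgue) = b r * (\<integral>s. (if s \<in> {r..T} then a s else 0) \<partial>lebesgue)"
      unfolding F_def integral_mult_right_zero[symmetric]
      using True by (intro Bochner_Integration.integral_cong) (auto simp: A_def B_def)
    also have "(\<integral>s. (if s \<in> {r..T} then a s else 0) \<partial>lebesgue) = integral {r..T} a"
      using True by (intro lebesgue_integral_restrict_eq_integral bounded_measurable_on_subset[OF a]) auto
    finally show ?thesis using True by simp
  next
    case False
    then have "(\<lambda>s. F s r) = (\<lambda>s. 0)" by (auto simp: F_def B_def fun_eq_iff)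
    with False show ?thesis by auto
  qed
  have "continuous_on {0..T} (\<lambda>s. integral {0..s} b)"
    by (intro indefinite_integral_continuous_1 bounded_measurable_on_integrable b)
  then have left: "bounded_measurable_on {0..T} (\<lambda>s. a s * integral {0..s} b)"
    by (intro bounded_measurable_on_mult a bounded_measurable_on_continuous)
  have "continuous_on {0..T} (\<lambda>r. integral {r..T} a)"
    by (intro indefinite_integral_continuous_1' bounded_measurable_on_integrable a)
  then have right: "bounded_measurable_on {0..T} (\<lambda>r. b r * integral {r..T} a)"
    by (intro bounded_measurable_on_mult b bounded_measurable_on_continuous)
  show ?thesis
    using fubini lebesgue_integral_restrict_eq_integral[OF left] lebesgue_integral_restrict_eq_integral[OF right]
    unfolding inner_r inner_s by simp
qed

lemma integral_pairing_primitives_eq_0: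
  assumes a: "bounded_measurable_on {0..T} a" and z: "bounded_measurable_on {0..T} z"
    and y: "continuous_on {0..T} y" "\<And>t. t \<in> {0..T} \<Longrightarrow> (z has_integral y t) {0..t}"
    and l: "continuous_on {0..T} l" "\<And>t. t \<in> {0..T} \<Longrightarrow> (a has_integral - l t) {t..T}"
  shows "integral {0..T} (\<lambda>s. a s * y s + l s * z s) = 0"
proof -
  have ay: "bounded_measurable_on {0..T} (\<lambda>s. a s * y s)"
    by (intro bounded_measurable_on_mult bounded_measurable_on_continuous a y(1))
  have lz: "bounded_measurable_on {0..T} (\<lambda>s. l s * z s)"
    by (intro bounded_measurable_on_mult bounded_measurable_on_continuous z l(1))
  have "integral {0..T} (\<lambda>s. a s * y s) = integral {0..T} (\<lambda>s. a s * integral {0..s} z)"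
    by (rule integral_cong) (simp add: integral_unique[OF y(2)])
  also have "\<dots> = integral {0..T} (\<lambda>r. z r * integral {r..T} a)"
    by (rule integral_mult_indefinite_integral_swap[OF a z])
  also have "\<dots> = integral {0..T} (\<lambda>r. - (l r * z r))"
    by (rule integral_cong) (simp add: integral_unique[OF l(2)])
  finally show ?thesis
    using integral_add[OF ay[THEN bounded_measurable_on_integrable] lz[THEN bounded_measurable_on_integrable]]
    by (simp add: integral_neg)
qed

definition growth :: "real \<Rightarrow> real \<Rightarrow> real \<Rightarrow> real \<Rightarrow> real" where
  "growth \<beta> K f m = f * m * \<beta> * Lfac K f m / 2"

lemma rhs_f_eq_growth: "rhs_f \<beta> \<delta> K e f m = growth \<beta> K f m - (\<delta> + e) * f"
  by (simp add: rhs_f_def growth_def algebra_simps)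

lemma rhs_m_eq_growth: "rhs_m \<beta> \<delta> K e f m = growth \<beta> K f m - (\<delta> + e) * m"
  by (simp add: rhs_m_def growth_def algebra_simps)

lemma growth_lipschitz:
  fixes a b a' b' R :: real
  assumes "0 \<le> \<beta>" "0 < K"
    and a: "\<bar>a\<bar> \<le> R" and b: "\<bar>b\<bar> \<le> R" and a': "\<bar>a'\<bar> \<le> R" and b': "\<bar>b'\<bar> \<le> R"
  shows "\<bar>growth \<beta> K a b - growth \<beta> K a' b'\<bar> \<le> \<beta> / 2 * (R + 4 * R\<^sup>2 / K) * (\<bar>a - a'\<bar> + \<bar>b - b'\<bar>)"
proof -
  define d where "d = \<bar>a - a'\<bar> + \<bar>b - b'\<bar>"
  have "0 \<le> R" using a by auto
  have ab: "\<bar>a * b - a' * b'\<bar> \<le> R * d"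
    using abs_mult_diff_le[OF a b', of b a'] by (simp add: d_def algebra_simps)
  have "\<bar>a' * b'\<bar> \<le> R * R" by (rule abs_mult_le[OF a' b'])
  have "\<bar>a * (a * b) - a' * (a' * b')\<bar> \<le> R * \<bar>a * b - a' * b'\<bar> + R * R * \<bar>a - a'\<bar>"
    by (rule abs_mult_diff_le[OF a \<open>\<bar>a' * b'\<bar> \<le> R * R\<close>])
  also have "\<dots> \<le> R * (R * d) + R * R * d"
    using ab \<open>0 \<le> R\<close> by (intro add_mono mult_left_mono) (auto simp: d_def)
  finally have a2b: "\<bar>a * (a * b) - a' * (a' * b')\<bar> \<le> 2 * R\<^sup>2 * d"
    by (simp add: power2_eq_square algebra_simps)
  have "\<bar>(a * b) * b - (a' * b') * b'\<bar> \<le> R * R * \<bar>b - b'\<bar> + R * \<bar>a * b - a' * b'\<bar>"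
    using abs_mult_diff_le[OF abs_mult_le[OF a b] b', of b "a' * b'"] by (simp add: mult_ac)
  also have "\<dots> \<le> R * R * d + R * (R * d)"
    using ab \<open>0 \<le> R\<close> by (intro add_mono mult_left_mono) (auto simp: d_def)
  finally have ab2: "\<bar>(a * b) * b - (a' * b') * b'\<bar> \<le> 2 * R\<^sup>2 * d"
    by (simp add: power2_eq_square algebra_simps)
  have "growth \<beta> K a b - growth \<beta> K a' b'
      = \<beta> / 2 * ((a * b - a' * b') - ((a * (a * b) - a' * (a' * b')) + ((a * b) * b - (a' * b') * b')) / K)"
    using \<open>0 < K\<close> by (simp add: growth_def Lfac_def field_simps)
  also have "\<bar>\<dots>\<bar> \<le> \<beta> / 2 * (R * d + (2 * R\<^sup>2 * d + 2 * R\<^sup>2 * d) / K)"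
  proof -
    have "\<bar>(a * (a * b) - a' * (a' * b')) + ((a * b) * b - (a' * b') * b')\<bar> \<le> 2 * R\<^sup>2 * d + 2 * R\<^sup>2 * d"
      using a2b ab2 by (intro order_trans[OF abs_triangle_ineq] add_mono)
    then have "\<bar>((a * (a * b) - a' * (a' * b')) + ((a * b) * b - (a' * b') * b')) / K\<bar>
        \<le> (2 * R\<^sup>2 * d + 2 * R\<^sup>2 * d) / K"
      using \<open>0 < K\<close> by (simp add: abs_divide divide_right_mono)
    with ab have "\<bar>(a * b - a' * b') - ((a * (a * b) - a' * (a' * b')) + ((a * b) * b - (a' * b') * b')) / K\<bar>
        \<le> R * d + (2 * R\<^sup>2 * d + 2 * R\<^sup>2 * d) / K"
      using abs_triangle_ineq4[of "a * b - a' * b'"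
          "((a * (a * b) - a' * (a' * b')) + ((a * b) * b - (a' * b') * b')) / K"] by linarith
    then show ?thesis
      using \<open>0 \<le> \<beta>\<close> by (simp add: abs_mult mult_left_mono)
  qed
  also have "\<dots> = \<beta> / 2 * (R + 4 * R\<^sup>2 / K) * d"
    by (simp add: field_simps)
  finally show ?thesis unfolding d_def .
qed

lemma rhs_lipschitz:
  fixes a b a' b' R :: real
  assumes "0 \<le> \<beta>" "0 \<le> \<delta>" "0 < K" "0 \<le> e" "e \<le> 1"
    and "\<bar>a\<bar> \<le> R" "\<bar>b\<bar> \<le> R" "\<bar>a'\<bar> \<le> R" "\<bar>b'\<bar> \<le> R"
  shows "\<bar>rhs_f \<beta> \<delta> K e a b - rhs_f \<beta> \<delta> K e a' b'\<bar> \<le> (\<beta> / 2 * (R + 4 * R\<^sup>2 / K) + \<delta> + 1) * (\<bar>a - a'\<bar> + \<bar>b - b'\<bar>)"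
    and "\<bar>rhs_m \<beta> \<delta> K e a b - rhs_m \<beta> \<delta> K e a' b'\<bar> \<le> (\<beta> / 2 * (R + 4 * R\<^sup>2 / K) + \<delta> + 1) * (\<bar>a - a'\<bar> + \<bar>b - b'\<bar>)"
proof -
  have g: "\<bar>growth \<beta> K a b - growth \<beta> K a' b'\<bar> \<le> \<beta> / 2 * (R + 4 * R\<^sup>2 / K) * (\<bar>a - a'\<bar> + \<bar>b - b'\<bar>)"
    using assms by (intro growth_lipschitz) auto
  have "\<bar>(\<delta> + e) * (x - x')\<bar> \<le> (\<delta> + 1) * (\<bar>a - a'\<bar> + \<bar>b - b'\<bar>)"
    if "\<bar>x - x'\<bar> \<le> \<bar>a - a'\<bar> + \<bar>b - b'\<bar>" for x x'
    using assms that by (simp add: abs_mult) (intro mult_mono, auto)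
  from this[of a a'] this[of b b'] g show
    "\<bar>rhs_f \<beta> \<delta> K e a b - rhs_f \<beta> \<delta> K e a' b'\<bar> \<le> (\<beta> / 2 * (R + 4 * R\<^sup>2 / K) + \<delta> + 1) * (\<bar>a - a'\<bar> + \<bar>b - b'\<bar>)"
    "\<bar>rhs_m \<beta> \<delta> K e a b - rhs_m \<beta> \<delta> K e a' b'\<bar> \<le> (\<beta> / 2 * (R + 4 * R\<^sup>2 / K) + \<delta> + 1) * (\<bar>a - a'\<bar> + \<bar>b - b'\<bar>)"
    unfolding rhs_f_eq_growth rhs_m_eq_growth by (auto simp: algebra_simps abs_le_iff)
qed

text \<open>\<open>growth \<beta> K (f + z1) (m + z2)\<close> minus its first-order Taylor polynomial at \<open>(f, m)\<close>
  equals \<open>\<beta> / 2 * growth_remainder K f m z1 z2\<close>.\<close>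
definition growth_remainder :: "real \<Rightarrow> real \<Rightarrow> real \<Rightarrow> real \<Rightarrow> real \<Rightarrow> real" where
  "growth_remainder K f m z1 z2 =
     z1 * z2 - (m * z1\<^sup>2 + 2 * f * z1 * z2 + z1\<^sup>2 * z2 + f * z2\<^sup>2 + 2 * m * z1 * z2 + z1 * z2\<^sup>2) / K"

text \<open>The adjoint coefficients \<open>adj1\<close>, \<open>adj2\<close> are exactly what makes every term linear in
  \<open>f' - f\<close> and \<open>m' - m\<close> cancel.\<close>
lemma hamiltonian_variation_eq:
  fixes \<beta> \<delta> K e1 e2 \<epsilon> h1 h2 f m f' m' l1 l2 :: real
  assumes "K \<noteq> 0"
  shows "(- (f' + m') - ((e1 + \<epsilon> * h1)\<^sup>2 + (e2 + \<epsilon> * h2)\<^sup>2) / 2) - (- (f + m) - (e1\<^sup>2 + e2\<^sup>2) / 2)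
       + (adj1 \<beta> \<delta> K e1 f m l1 l2 * (f' - f) + l1 * (rhs_f \<beta> \<delta> K (e1 + \<epsilon> * h1) f' m' - rhs_f \<beta> \<delta> K e1 f m))
       + (adj2 \<beta> \<delta> K e2 f m l1 l2 * (m' - m) + l2 * (rhs_m \<beta> \<delta> K (e2 + \<epsilon> * h2) f' m' - rhs_m \<beta> \<delta> K e2 f m))
     = \<epsilon> * ((- f * l1 - e1) * h1 + (- m * l2 - e2) * h2) - \<epsilon>\<^sup>2 * (h1\<^sup>2 + h2\<^sup>2) / 2
       + l1 * (\<beta> / 2 * growth_remainder K f m (f' - f) (m' - m) - \<epsilon> * h1 * (f' - f))
       + l2 * (\<beta> / 2 * growth_remainder K f m (f' - f) (m' - m) - \<epsilon> * h2 * (m' - m))"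
  using assms unfolding adj1_def adj2_def rhs_f_def rhs_m_def Lfac_def growth_remainder_def
  by (simp add: field_simps power2_eq_square)

lemma growth_remainder_bound:
  fixes K f m z1 z2 B Z :: real
  assumes "0 < K" and f: "\<bar>f\<bar> \<le> B" and m: "\<bar>m\<bar> \<le> B" and z1: "\<bar>z1\<bar> \<le> Z" and z2: "\<bar>z2\<bar> \<le> Z"
    and "Z \<le> 1"
  shows "\<bar>growth_remainder K f m z1 z2\<bar> \<le> (1 + (6 * B + 2) / K) * Z\<^sup>2"
proof -
  have "0 \<le> Z" using z1 by auto
  have Z3: "Z * Z * Z \<le> Z * Z"
    using \<open>Z \<le> 1\<close> \<open>0 \<le> Z\<close> by (simp add: mult_left_le_one_le mult.commute)
  have t1: "\<bar>z1 * z2\<bar> \<le> Z * Z" by (rule abs_mult_le[OF z1 z2])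
  have t2: "\<bar>m * z1\<^sup>2\<bar> \<le> B * (Z * Z)"
    unfolding power2_eq_square by (intro abs_mult_le m z1)
  have t3: "\<bar>2 * f * z1 * z2\<bar> \<le> 2 * B * (Z * Z)"
    using abs_mult_le[OF abs_mult_le[OF f z1] z2] by (simp add: abs_mult mult_ac)
  have t4: "\<bar>z1\<^sup>2 * z2\<bar> \<le> Z * Z"
    using order_trans[OF abs_mult_le[OF abs_mult_le[OF z1 z1] z2] Z3] by (simp add: power2_eq_square)
  have t5: "\<bar>f * z2\<^sup>2\<bar> \<le> B * (Z * Z)"
    unfolding power2_eq_square by (intro abs_mult_le f z2)
  have t6: "\<bar>2 * m * z1 * z2\<bar> \<le> 2 * B * (Z * Z)"
    using abs_mult_le[OF abs_mult_le[OF m z1] z2] by (simp add: abs_mult mult_ac)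
  have t7: "\<bar>z1 * z2\<^sup>2\<bar> \<le> Z * Z"
    using order_trans[OF abs_mult_le[OF abs_mult_le[OF z1 z2] z2] Z3] by (simp add: power2_eq_square mult.assoc)
  have "\<bar>m * z1\<^sup>2 + 2 * f * z1 * z2 + z1\<^sup>2 * z2 + f * z2\<^sup>2 + 2 * m * z1 * z2 + z1 * z2\<^sup>2\<bar>
      \<le> (6 * B + 2) * (Z * Z)"
    using t2 t3 t4 t5 t6 t7
      abs_triangle_ineq[of "m * z1\<^sup>2 + 2 * f * z1 * z2 + z1\<^sup>2 * z2 + f * z2\<^sup>2 + 2 * m * z1 * z2" "z1 * z2\<^sup>2"]
      abs_triangle_ineq[of "m * z1\<^sup>2 + 2 * f * z1 * z2 + z1\<^sup>2 * z2 + f * z2\<^sup>2" "2 * m * z1 * z2"]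
      abs_triangle_ineq[of "m * z1\<^sup>2 + 2 * f * z1 * z2 + z1\<^sup>2 * z2" "f * z2\<^sup>2"]
      abs_triangle_ineq[of "m * z1\<^sup>2 + 2 * f * z1 * z2" "z1\<^sup>2 * z2"]
      abs_triangle_ineq[of "m * z1\<^sup>2" "2 * f * z1 * z2"]
      distrib_right[of "6 * B" 2 "Z * Z"]
    by linarith
  with t1 \<open>0 < K\<close> have "\<bar>growth_remainder K f m z1 z2\<bar> \<le> Z * Z + (6 * B + 2) * (Z * Z) / K"
    unfolding growth_remainder_def
    by (intro order_trans[OF abs_triangle_ineq4] add_mono) (auto simp: abs_divide divide_right_mono)
  also have "\<dots> = (1 + (6 * B + 2) / K) * Z\<^sup>2"
    by (simp add: field_simps power2_eq_square)
  finally show ?thesis .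
qed

lemma hamiltonian_variation_lower_bound:
  fixes \<beta> K e1 e2 \<epsilon> h1 h2 f m z1 z2 l1 l2 B C L :: real
  assumes "0 < K" "0 \<le> \<beta>" "0 < \<epsilon>" "\<epsilon> \<le> 1"
    and e1: "0 \<le> e1" "e1 \<le> 1" and e2: "0 \<le> e2" "e2 \<le> 1"
    and h1: "h1 = min 1 (max 0 (- f * l1)) - e1" and h2: "h2 = min 1 (max 0 (- m * l2)) - e2"
    and f: "\<bar>f\<bar> \<le> B" and m: "\<bar>m\<bar> \<le> B"
    and z1: "\<bar>z1\<bar> \<le> C * \<epsilon>" and z2: "\<bar>z2\<bar> \<le> C * \<epsilon>" and "C * \<epsilon> \<le> 1"
    and l1: "\<bar>l1\<bar> \<le> L" and l2: "\<bar>l2\<bar> \<le> L"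
  shows "\<epsilon> / 2 * (h1\<^sup>2 + h2\<^sup>2) - 2 * L * (\<beta> / 2 * (1 + (6 * B + 2) / K) * C\<^sup>2 + C) * \<epsilon>\<^sup>2
    \<le> \<epsilon> * ((- f * l1 - e1) * h1 + (- m * l2 - e2) * h2) - \<epsilon>\<^sup>2 * (h1\<^sup>2 + h2\<^sup>2) / 2
       + l1 * (\<beta> / 2 * growth_remainder K f m z1 z2 - \<epsilon> * h1 * z1)
       + l2 * (\<beta> / 2 * growth_remainder K f m z1 z2 - \<epsilon> * h2 * z2)"
proof -
  define W where "W = (\<beta> / 2 * (1 + (6 * B + 2) / K) * C\<^sup>2 + C) * \<epsilon>\<^sup>2"
  have Q: "\<bar>growth_remainder K f m z1 z2\<bar> \<le> (1 + (6 * B + 2) / K) * (C * \<epsilon>)\<^sup>2"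
    by (rule growth_remainder_bound) fact+
  have R: "\<bar>\<beta> / 2 * growth_remainder K f m z1 z2 - \<epsilon> * h * z\<bar> \<le> W"
    if "\<bar>h\<bar> \<le> 1" "\<bar>z\<bar> \<le> C * \<epsilon>" for h z
  proof -
    have "\<bar>\<beta> / 2 * growth_remainder K f m z1 z2\<bar> \<le> \<beta> / 2 * ((1 + (6 * B + 2) / K) * (C * \<epsilon>)\<^sup>2)"
      using Q \<open>0 \<le> \<beta>\<close> by (simp add: abs_mult mult_left_mono)
    moreover have "\<bar>\<epsilon> * h * z\<bar> \<le> \<epsilon> * 1 * (C * \<epsilon>)"
      using that \<open>0 < \<epsilon>\<close> by (intro abs_mult_le) (auto simp: abs_mult mult_left_le)
    moreover have "W = \<beta> / 2 * ((1 + (6 * B + 2) / K) * (C * \<epsilon>)\<^sup>2) + \<epsilon> * 1 * (C * \<epsilon>)"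
      by (simp add: W_def power2_eq_square algebra_simps)
    ultimately show ?thesis
      using abs_triangle_ineq4[of "\<beta> / 2 * growth_remainder K f m z1 z2" "\<epsilon> * h * z"] by linarith
  qed
  have "\<bar>h1\<bar> \<le> 1" "\<bar>h2\<bar> \<le> 1"
    using e1 e2 unfolding h1 h2 by auto
  then have "\<bar>l1 * (\<beta> / 2 * growth_remainder K f m z1 z2 - \<epsilon> * h1 * z1)
      + l2 * (\<beta> / 2 * growth_remainder K f m z1 z2 - \<epsilon> * h2 * z2)\<bar> \<le> L * W + L * W"
    using l1 l2 z1 z2 by (intro order_trans[OF abs_triangle_ineq] add_mono abs_mult_le R)
  then have remainder: "- (2 * L * (\<beta> / 2 * (1 + (6 * B + 2) / K) * C\<^sup>2 + C) * \<epsilon>\<^sup>2)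
      \<le> l1 * (\<beta> / 2 * growth_remainder K f m z1 z2 - \<epsilon> * h1 * z1)
        + l2 * (\<beta> / 2 * growth_remainder K f m z1 z2 - \<epsilon> * h2 * z2)"
    unfolding W_def by (simp only: abs_le_iff) (simp add: algebra_simps)
  have "h1\<^sup>2 \<le> (- f * l1 - e1) * h1" "h2\<^sup>2 \<le> (- m * l2 - e2) * h2"
    unfolding h1 h2 by (rule projection_unit_interval_ineq[OF e1], rule projection_unit_interval_ineq[OF e2])
  then have first_order: "\<epsilon> * (h1\<^sup>2 + h2\<^sup>2) \<le> \<epsilon> * ((- f * l1 - e1) * h1 + (- m * l2 - e2) * h2)"
    using \<open>0 < \<epsilon>\<close> by (intro mult_left_mono) auto
  have second_order: "\<epsilon>\<^sup>2 * (h1\<^sup>2 + h2\<^sup>2) / 2 \<le> \<epsilon> * (h1\<^sup>2 + h2\<^sup>2) / 2"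
    using \<open>0 < \<epsilon>\<close> \<open>\<epsilon> \<le> 1\<close> by (intro divide_right_mono mult_right_mono) (auto simp: power2_eq_square)
  have "\<epsilon> / 2 * (h1\<^sup>2 + h2\<^sup>2) = \<epsilon> * (h1\<^sup>2 + h2\<^sup>2) - \<epsilon> * (h1\<^sup>2 + h2\<^sup>2) / 2"
    by simp
  with remainder first_order second_order show ?thesis
    by linarith
qed

section \<open>State and adjoint equations\<close>

lemma bounded_measurable_on_rhs:
  assumes "bounded_measurable_on S e" "bounded_measurable_on S f" "bounded_measurable_on S m"
  shows "bounded_measurable_on S (\<lambda>s. rhs_f \<beta> \<delta> K (e s) (f s) (m s))"
    and "bounded_measurable_on S (\<lambda>s. rhs_m \<beta> \<delta> K (e s) (f s) (m s))"
  unfolding rhs_f_def rhs_m_def Lfac_def by (intro bounded_measurable_on_intros assms)+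

lemma bounded_measurable_on_adj:
  assumes "bounded_measurable_on S e" "bounded_measurable_on S f" "bounded_measurable_on S m"
    "bounded_measurable_on S l1" "bounded_measurable_on S l2"
  shows "bounded_measurable_on S (\<lambda>s. adj1 \<beta> \<delta> K (e s) (f s) (m s) (l1 s) (l2 s))"
    and "bounded_measurable_on S (\<lambda>s. adj2 \<beta> \<delta> K (e s) (f s) (m s) (l1 s) (l2 s))"
  unfolding adj1_def adj2_def Lfac_def by (intro bounded_measurable_on_intros assms)+

lemma linear_backward_system_exists:
  assumes "0 \<le> T"
    and c: "bounded_measurable_on {0..T} c11" "bounded_measurable_on {0..T} c21"
      "bounded_measurable_on {0..T} c12" "bounded_measurable_on {0..T} c22"
  obtains l1 l2 where "continuous_on {0..T} l1" "continuous_on {0..T} l2" "l1 T = 0" "l2 T = 0"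
    and "\<And>t. t \<in> {0..T} \<Longrightarrow> ((\<lambda>s. 1 - l1 s * c11 s - l2 s * c21 s) has_integral (l1 T - l1 t)) {t..T}"
    and "\<And>t. t \<in> {0..T} \<Longrightarrow> ((\<lambda>s. 1 - l1 s * c12 s - l2 s * c22 s) has_integral (l2 T - l2 t)) {t..T}"
proof -
  obtain M11 where M11: "0 \<le> M11" "\<And>s. s \<in> {0..T} \<Longrightarrow> \<bar>c11 s\<bar> \<le> M11"
    using bounded_measurable_on_boundE[OF c(1)] by blast
  obtain M21 where M21: "0 \<le> M21" "\<And>s. s \<in> {0..T} \<Longrightarrow> \<bar>c21 s\<bar> \<le> M21"
    using bounded_measurable_on_boundE[OF c(2)] by blast
  obtain M12 where M12: "0 \<le> M12" "\<And>s. s \<in> {0..T} \<Longrightarrow> \<bar>c12 s\<bar> \<le> M12"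
    using bounded_measurable_on_boundE[OF c(3)] by blast
  obtain M22 where M22: "0 \<le> M22" "\<And>s. s \<in> {0..T} \<Longrightarrow> \<bar>c22 s\<bar> \<le> M22"
    using bounded_measurable_on_boundE[OF c(4)] by blast
  define A where "A s p = (1 - fst p * c11 s - snd p * c21 s, 1 - fst p * c12 s - snd p * c22 s)"
    for s and p :: "real \<times> real"
  have lipschitz: "norm (A t p - A t q) \<le> (M11 + M21 + M12 + M22) * norm (p - q)" if t: "t \<in> {0..T}" for t p q
  proof -
    have d: "\<bar>fst q - fst p\<bar> \<le> norm (p - q)" "\<bar>snd q - snd p\<bar> \<le> norm (p - q)"
      using abs_fst_le_norm[of "p - q"] abs_snd_le_norm[of "p - q"] by (simp_all add: abs_minus_commute)
    have "fst (A t p - A t q) = (fst q - fst p) * c11 t + (snd q - snd p) * c21 t"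
      by (simp add: A_def algebra_simps)
    also have "\<bar>\<dots>\<bar> \<le> norm (p - q) * M11 + norm (p - q) * M21"
      using d M11(2)[OF t] M21(2)[OF t] by (intro order_trans[OF abs_triangle_ineq] add_mono abs_mult_le)
    finally have "\<bar>fst (A t p - A t q)\<bar> \<le> norm (p - q) * M11 + norm (p - q) * M21" .
    moreover have "snd (A t p - A t q) = (fst q - fst p) * c12 t + (snd q - snd p) * c22 t"
      by (simp add: A_def algebra_simps)
    then have "\<bar>snd (A t p - A t q)\<bar> \<le> norm (p - q) * M12 + norm (p - q) * M22"
      using d M12(2)[OF t] M22(2)[OF t] by (simp only:) (intro order_trans[OF abs_triangle_ineq] add_mono abs_mult_le)
    ultimately show ?thesis
      using norm_Pair_le_abs[of "A t p - A t q"] by (simp add: algebra_simps)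
  qed
  have integrable: "(\<lambda>s. A s (p s)) integrable_on {0..T}" if p: "continuous_on {0..T} p" for p
  proof -
    have "bounded_measurable_on {0..T} (\<lambda>s. fst (p s))" "bounded_measurable_on {0..T} (\<lambda>s. snd (p s))"
      by (intro bounded_measurable_on_continuous continuous_intros p)+
    then show ?thesis
      unfolding A_def using c
      by (intro integrable_on_Pair bounded_measurable_on_integrable bounded_measurable_on_intros)
  qed
  have "0 \<le> M11 + M21 + M12 + M22" using M11 M21 M12 M22 by simp
  obtain l where l: "continuous_on {0..T} l" "l T = 0"
    and l_eq: "\<And>t. t \<in> {0..T} \<Longrightarrow> ((\<lambda>s. A s (l s)) has_integral (l T - l t)) {t..T}"
    using backward_integral_equation_exists[where A=A, OF lipschitz \<open>0 \<le> M11 + M21 + M12 + M22\<close>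
        \<open>0 \<le> T\<close> integrable] by blast
  show ?thesis
  proof
    show "continuous_on {0..T} (\<lambda>s. fst (l s))" "continuous_on {0..T} (\<lambda>s. snd (l s))"
      by (intro continuous_intros l)+
    show "fst (l T) = 0" "snd (l T) = 0"
      using l by simp_all
  next
    fix t assume "t \<in> {0..T}"
    from has_integral_fst[OF l_eq[OF this]] has_integral_snd[OF l_eq[OF this]]
    show "((\<lambda>s. 1 - fst (l s) * c11 s - snd (l s) * c21 s) has_integral (fst (l T) - fst (l t))) {t..T}"
      "((\<lambda>s. 1 - fst (l s) * c12 s - snd (l s) * c22 s) has_integral (snd (l T) - snd (l t))) {t..T}"
      by (simp_all add: A_def)
  qed
qed

lemma adjoint_exists:
  assumes "0 \<le> T" "continuous_on {0..T} f" "continuous_on {0..T} m"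
    and "admissible T \<eta>1" "admissible T \<eta>2"
  obtains l1 l2 where "continuous_on {0..T} l1" "continuous_on {0..T} l2" "l1 T = 0" "l2 T = 0"
    and "\<And>t. t \<in> {0..T} \<Longrightarrow>
      ((\<lambda>s. adj1 \<beta> \<delta> K (\<eta>1 s) (f s) (m s) (l1 s) (l2 s)) has_integral (l1 T - l1 t)) {t..T}"
    and "\<And>t. t \<in> {0..T} \<Longrightarrow>
      ((\<lambda>s. adj2 \<beta> \<delta> K (\<eta>2 s) (f s) (m s) (l1 s) (l2 s)) has_integral (l2 T - l2 t)) {t..T}"
proof -
  define g where "g s = m s * \<beta> / 2 * Lfac K (f s) (m s) - f s * m s * \<beta> / (2 * K)" for s
  define h where "h s = f s * \<beta> / 2 * Lfac K (f s) (m s) - f s * m s * \<beta> / (2 * K)" for s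
  have bm: "bounded_measurable_on {0..T} f" "bounded_measurable_on {0..T} m"
      "bounded_measurable_on {0..T} \<eta>1" "bounded_measurable_on {0..T} \<eta>2"
    using assms by (auto intro: bounded_measurable_on_continuous admissible_imp_bounded_measurable_on)
  then have "bounded_measurable_on {0..T} (\<lambda>s. g s - \<delta> - \<eta>1 s)" "bounded_measurable_on {0..T} g"
    "bounded_measurable_on {0..T} h" "bounded_measurable_on {0..T} (\<lambda>s. h s - \<delta> - \<eta>2 s)"
    unfolding g_def h_def Lfac_def by (intro bounded_measurable_on_intros bm)+
  from linear_backward_system_exists[OF \<open>0 \<le> T\<close> this]
  obtain l1 l2 where l: "continuous_on {0..T} l1" "continuous_on {0..T} l2" "l1 T = 0" "l2 T = 0"
    "\<And>t. t \<in> {0..T} \<Longrightarrow>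
      ((\<lambda>s. 1 - l1 s * (g s - \<delta> - \<eta>1 s) - l2 s * g s) has_integral (l1 T - l1 t)) {t..T}"
    "\<And>t. t \<in> {0..T} \<Longrightarrow>
      ((\<lambda>s. 1 - l1 s * h s - l2 s * (h s - \<delta> - \<eta>2 s)) has_integral (l2 T - l2 t)) {t..T}"
    by blast
  have "adj1 \<beta> \<delta> K (\<eta>1 s) (f s) (m s) x y = 1 - x * (g s - \<delta> - \<eta>1 s) - y * g s"
    and "adj2 \<beta> \<delta> K (\<eta>2 s) (f s) (m s) x y = 1 - x * h s - y * (h s - \<delta> - \<eta>2 s)" for s x y
    by (simp_all add: adj1_def adj2_def g_def h_def)
  with l show ?thesis
    by (intro that[of l1 l2]) simp_all
qed

definition state_field :: "real \<Rightarrow> real \<Rightarrow> real \<Rightarrow> real \<Rightarrow> real \<Rightarrow> real \<times> real \<Rightarrow> real \<times> real" where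
  "state_field \<beta> \<delta> K e1 e2 p = (rhs_f \<beta> \<delta> K e1 (fst p) (snd p), rhs_m \<beta> \<delta> K e2 (fst p) (snd p))"

lemma is_state_iff_integral_equation:
  "is_state \<beta> \<delta> K T f0 m0 \<eta>1 \<eta>2 f m \<longleftrightarrow>
     continuous_on {0..T} (\<lambda>s. (f s, m s)) \<and>
     (\<forall>t\<in>{0..T}. ((\<lambda>s. state_field \<beta> \<delta> K (\<eta>1 s) (\<eta>2 s) (f s, m s)) has_integral (f t, m t) - (f0, m0)) {0..t})"
proof -
  have "continuous_on {0..T} (\<lambda>s. (f s, m s)) \<longleftrightarrow> continuous_on {0..T} f \<and> continuous_on {0..T} m"
  proof
    assume "continuous_on {0..T} (\<lambda>s. (f s, m s))"
    from continuous_on_fst[OF this] continuous_on_snd[OF this]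
    show "continuous_on {0..T} f \<and> continuous_on {0..T} m" by simp
  qed (simp add: continuous_on_Pair)
  moreover have "((\<lambda>s. state_field \<beta> \<delta> K (\<eta>1 s) (\<eta>2 s) (f s, m s)) has_integral (f t, m t) - (f0, m0)) {0..t}
      \<longleftrightarrow> ((\<lambda>s. rhs_f \<beta> \<delta> K (\<eta>1 s) (f s) (m s)) has_integral f t - f0) {0..t}
        \<and> ((\<lambda>s. rhs_m \<beta> \<delta> K (\<eta>2 s) (f s) (m s)) has_integral m t - m0) {0..t}" for t
  proof
    assume "((\<lambda>s. state_field \<beta> \<delta> K (\<eta>1 s) (\<eta>2 s) (f s, m s)) has_integral (f t, m t) - (f0, m0)) {0..t}"
    from has_integral_fst[OF this] has_integral_snd[OF this]
    show "((\<lambda>s. rhs_f \<beta> \<delta> K (\<eta>1 s) (f s) (m s)) has_integral f t - f0) {0..t}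
        \<and> ((\<lambda>s. rhs_m \<beta> \<delta> K (\<eta>2 s) (f s) (m s)) has_integral m t - m0) {0..t}"
      by (simp add: state_field_def)
  next
    assume "((\<lambda>s. rhs_f \<beta> \<delta> K (\<eta>1 s) (f s) (m s)) has_integral f t - f0) {0..t}
        \<and> ((\<lambda>s. rhs_m \<beta> \<delta> K (\<eta>2 s) (f s) (m s)) has_integral m t - m0) {0..t}"
    then show "((\<lambda>s. state_field \<beta> \<delta> K (\<eta>1 s) (\<eta>2 s) (f s, m s)) has_integral (f t, m t) - (f0, m0)) {0..t}"
      unfolding state_field_def by (auto dest: has_integral_Pair)
  qed
  ultimately show ?thesis
    unfolding is_state_def by blast
qed

lemma state_field_lipschitz:
  assumes "0 \<le> \<beta>" "0 \<le> \<delta>" "0 < K" "0 \<le> e1" "e1 \<le> 1" "0 \<le> e2" "e2 \<le> 1"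
    and "\<bar>fst p\<bar> \<le> R" "\<bar>snd p\<bar> \<le> R" "\<bar>fst q\<bar> \<le> R" "\<bar>snd q\<bar> \<le> R"
  shows "norm (state_field \<beta> \<delta> K e1 e2 p - state_field \<beta> \<delta> K e1 e2 q)
    \<le> 4 * (\<beta> / 2 * (R + 4 * R\<^sup>2 / K) + \<delta> + 1) * norm (p - q)"
proof -
  define L where "L = \<beta> / 2 * (R + 4 * R\<^sup>2 / K) + \<delta> + 1"
  have "0 \<le> L" unfolding L_def using assms by (auto intro!: add_nonneg_nonneg mult_nonneg_nonneg)
  have d: "\<bar>fst p - fst q\<bar> + \<bar>snd p - snd q\<bar> \<le> 2 * norm (p - q)"
    using abs_fst_le_norm[of "p - q"] abs_snd_le_norm[of "p - q"] by simp
  have "\<bar>rhs_f \<beta> \<delta> K e1 (fst p) (snd p) - rhs_f \<beta> \<delta> K e1 (fst q) (snd q)\<bar> \<le> L * (2 * norm (p - q))"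
    unfolding L_def using assms \<open>0 \<le> L\<close>
    by (intro order_trans[OF rhs_lipschitz(1) mult_left_mono[OF d]]) (auto simp: L_def)
  moreover have "\<bar>rhs_m \<beta> \<delta> K e2 (fst p) (snd p) - rhs_m \<beta> \<delta> K e2 (fst q) (snd q)\<bar> \<le> L * (2 * norm (p - q))"
    unfolding L_def using assms \<open>0 \<le> L\<close>
    by (intro order_trans[OF rhs_lipschitz(2) mult_left_mono[OF d]]) (auto simp: L_def)
  moreover have "norm (state_field \<beta> \<delta> K e1 e2 p - state_field \<beta> \<delta> K e1 e2 q)
      \<le> \<bar>rhs_f \<beta> \<delta> K e1 (fst p) (snd p) - rhs_f \<beta> \<delta> K e1 (fst q) (snd q)\<bar>
        + \<bar>rhs_m \<beta> \<delta> K e2 (fst p) (snd p) - rhs_m \<beta> \<delta> K e2 (fst q) (snd q)\<bar>"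
    using norm_Pair_le_abs[of "state_field \<beta> \<delta> K e1 e2 p - state_field \<beta> \<delta> K e1 e2 q"]
    by (simp add: state_field_def)
  ultimately show ?thesis
    unfolding L_def[symmetric] by linarith
qed

lemma state_field_control_diff:
  "norm (state_field \<beta> \<delta> K e1 e2 p - state_field \<beta> \<delta> K e1' e2' p)
    \<le> \<bar>e1 - e1'\<bar> * \<bar>fst p\<bar> + \<bar>e2 - e2'\<bar> * \<bar>snd p\<bar>"
proof -
  have "state_field \<beta> \<delta> K e1 e2 p - state_field \<beta> \<delta> K e1' e2' p = (- ((e1 - e1') * fst p), - ((e2 - e2') * snd p))"
    by (simp add: state_field_def rhs_f_def rhs_m_def algebra_simps)
  then show ?thesis
    using norm_Pair_le_abs[of "state_field \<beta> \<delta> K e1 e2 p - state_field \<beta> \<delta> K e1' e2' p"]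
    by (simp add: abs_mult)
qed

lemma clamp_box_bounds:
  assumes "0 \<le> R"
  shows "\<bar>fst (clamp (-R, -R) (R, R) p)\<bar> \<le> R \<and> \<bar>snd (clamp (-R, -R) (R, R) p)\<bar> \<le> (R::real)"
proof -
  have "clamp (-R, -R) (R, R) p \<in> cbox (-R, -R) (R, R)"
    using assms by (intro clamp_in_interval) (auto simp: Basis_prod_def)
  then show ?thesis
    by (cases "clamp (-R, -R) (R, R) p") (auto simp: cbox_Pair_iff)
qed

lemma clamp_box_cancel:
  "\<bar>fst p\<bar> \<le> R \<Longrightarrow> \<bar>snd p\<bar> \<le> R \<Longrightarrow> clamp (-R, -R) (R, R) p = (p::real \<times> real)"
  by (cases p) (auto intro!: clamp_cancel_cbox simp: cbox_Pair_iff)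

lemma continuous_on_clamp_box: "continuous_on S (clamp (-R, -R) (R, R) :: real \<times> real \<Rightarrow> real \<times> real)"
  using clamp_continuous_on[of "(-R, -R)" "(R, R)" "\<lambda>x. x"] by simp

lemma clamped_state_field_lipschitz:
  assumes "0 \<le> \<beta>" "0 \<le> \<delta>" "0 < K" "0 \<le> R" "0 \<le> e1" "e1 \<le> 1" "0 \<le> e2" "e2 \<le> 1"
  shows "norm (state_field \<beta> \<delta> K e1 e2 (clamp (-R, -R) (R, R) p) - state_field \<beta> \<delta> K e1 e2 (clamp (-R, -R) (R, R) q))
    \<le> 4 * (\<beta> / 2 * (R + 4 * R\<^sup>2 / K) + \<delta> + 1) * norm (p - q)"
proof -
  have "0 \<le> 4 * (\<beta> / 2 * (R + 4 * R\<^sup>2 / K) + \<delta> + 1)"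
    using assms by (auto intro!: add_nonneg_nonneg mult_nonneg_nonneg)
  moreover have "norm (clamp (-R, -R) (R, R) p - clamp (-R, -R) (R, R) q) \<le> norm (p - q)"
    using dist_clamps_le_dist_args[of "(-R, -R)" "(R, R)" p q] by (simp add: dist_norm)
  ultimately show ?thesis
    using clamp_box_bounds[OF \<open>0 \<le> R\<close>, of p] clamp_box_bounds[OF \<open>0 \<le> R\<close>, of q] assms
    by (intro order_trans[OF state_field_lipschitz mult_left_mono]) auto
qed

lemma clamped_state_field_integrable:
  assumes "admissible T e1" "admissible T e2" "continuous_on {0..T} x"
  shows "(\<lambda>s. state_field \<beta> \<delta> K (e1 s) (e2 s) (clamp (-R, -R) (R, R) (x s))) integrable_on {0..T}"
proof -
  have cont: "continuous_on {0..T} (\<lambda>s. clamp (-R, -R) (R, R) (x s))"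
    by (rule continuous_on_compose2[OF continuous_on_clamp_box assms(3)]) auto
  have "bounded_measurable_on {0..T} (\<lambda>s. fst (clamp (-R, -R) (R, R) (x s)))"
    "bounded_measurable_on {0..T} (\<lambda>s. snd (clamp (-R, -R) (R, R) (x s)))"
    by (intro bounded_measurable_on_continuous continuous_intros cont)+
  with assms(1,2)[THEN admissible_imp_bounded_measurable_on] show ?thesis
    unfolding state_field_def
    by (intro integrable_on_Pair bounded_measurable_on_integrable bounded_measurable_on_rhs)
qed

lemma is_state_iff_clamped_integral_equation:
  assumes "\<forall>s\<in>{0..T}. \<bar>f s\<bar> \<le> R \<and> \<bar>m s\<bar> \<le> R"
  shows "is_state \<beta> \<delta> K T f0 m0 \<eta>1 \<eta>2 f m \<longleftrightarrow>
     continuous_on {0..T} (\<lambda>s. (f s, m s)) \<and>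
     (\<forall>t\<in>{0..T}. ((\<lambda>s. state_field \<beta> \<delta> K (\<eta>1 s) (\<eta>2 s) (clamp (-R, -R) (R, R) (f s, m s)))
        has_integral (f t, m t) - (f0, m0)) {0..t})"
proof -
  have "((\<lambda>s. state_field \<beta> \<delta> K (\<eta>1 s) (\<eta>2 s) (clamp (-R, -R) (R, R) (f s, m s))) has_integral i) {0..t}
      \<longleftrightarrow> ((\<lambda>s. state_field \<beta> \<delta> K (\<eta>1 s) (\<eta>2 s) (f s, m s)) has_integral i) {0..t}" if "t \<in> {0..T}" for t i
    using assms that by (intro has_integral_cong) (auto simp: clamp_box_cancel)
  then show ?thesis
    unfolding is_state_iff_integral_equation by auto
qed

text \<open>The vector field is only locally Lipschitz, so it is clamped to a box of radius \<open>R\<close> around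
  the given trajectory; the stability estimate then shows that the perturbed trajectory never
  reaches the edge of the box.\<close>
lemma perturbed_state_in_box:
  assumes "0 \<le> \<beta>" "0 \<le> \<delta>" "0 < K" "0 \<le> T" "0 \<le> R"
    and state: "is_state \<beta> \<delta> K T f0 m0 \<eta>1 \<eta>2 f m"
    and fm: "\<forall>s\<in>{0..T}. \<bar>f s\<bar> \<le> R - 1 \<and> \<bar>m s\<bar> \<le> R - 1"
    and \<zeta>: "admissible T \<zeta>1" "admissible T \<zeta>2"
    and close: "\<forall>t\<in>{0..T}. \<bar>\<zeta>1 t - \<eta>1 t\<bar> \<le> \<epsilon> \<and> \<bar>\<zeta>2 t - \<eta>2 t\<bar> \<le> \<epsilon>"
    and C: "C = 4 * R * T * exp ((2 * (4 * (\<beta> / 2 * (R + 4 * R\<^sup>2 / K) + \<delta> + 1)) + 1) * T)"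
    and "C * \<epsilon> \<le> 1"
  shows "\<exists>f' m'. is_state \<beta> \<delta> K T f0 m0 \<zeta>1 \<zeta>2 f' m' \<and>
    (\<forall>t\<in>{0..T}. \<bar>f' t - f t\<bar> \<le> C * \<epsilon> \<and> \<bar>m' t - m t\<bar> \<le> C * \<epsilon>)"
proof -
  define Lc where "Lc = 4 * (\<beta> / 2 * (R + 4 * R\<^sup>2 / K) + \<delta> + 1)"
  have "0 \<le> Lc" unfolding Lc_def using assms(1-3,5) by (auto intro!: add_nonneg_nonneg mult_nonneg_nonneg)
  define G where "G s p = state_field \<beta> \<delta> K (\<zeta>1 s) (\<zeta>2 s) (clamp (-R, -R) (R, R) p)" for s p
  define G0 where "G0 s p = state_field \<beta> \<delta> K (\<eta>1 s) (\<eta>2 s) (clamp (-R, -R) (R, R) p)" for s p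
  have "\<forall>s\<in>{0..T}. \<bar>f s\<bar> \<le> R \<and> \<bar>m s\<bar> \<le> R"
    using fm by auto
  then have "continuous_on {0..T} (\<lambda>s. (f s, m s)) \<and>
      (\<forall>t\<in>{0..T}. ((\<lambda>s. G0 s (f s, m s)) has_integral (f t, m t) - (f0, m0)) {0..t})"
    using state is_state_iff_clamped_integral_equation unfolding G0_def by blast
  then have y: "continuous_on {0..T} (\<lambda>s. (f s, m s))"
    and y_eq: "\<And>t. t \<in> {0..T} \<Longrightarrow> ((\<lambda>s. G0 s (f s, m s)) has_integral (f t, m t) - (f0, m0)) {0..t}"
    by auto
  have "0 \<le> \<zeta>1 t \<and> \<zeta>1 t \<le> 1" "0 \<le> \<zeta>2 t \<and> \<zeta>2 t \<le> 1" if "t \<in> {0..T}" for t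
    using \<zeta> that unfolding admissible_iff by blast+
  then have lipschitz: "norm (G t p - G t q) \<le> Lc * norm (p - q)" if "t \<in> {0..T}" for t p q
    unfolding G_def Lc_def using assms(1-3,5) that by (intro clamped_state_field_lipschitz) auto
  have integrable: "(\<lambda>s. G s (x s)) integrable_on {0..T}" if "continuous_on {0..T} x" for x
    unfolding G_def using \<zeta> that by (rule clamped_state_field_integrable)
  obtain x where x: "continuous_on {0..T} x"
    and x_eq: "\<And>t. t \<in> {0..T} \<Longrightarrow> ((\<lambda>s. G s (x s)) has_integral (x t - (f0, m0))) {0..t}"
    using integral_equation_exists[where G=G, OF lipschitz \<open>0 \<le> Lc\<close> \<open>0 \<le> T\<close> integrable] by blast
  have G_G0: "norm (G t p - G0 t p) \<le> 2 * \<epsilon> * R" if "t \<in> {0..T}" for t p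
  proof -
    have "\<bar>\<zeta>1 t - \<eta>1 t\<bar> * \<bar>fst (clamp (-R, -R) (R, R) p)\<bar> + \<bar>\<zeta>2 t - \<eta>2 t\<bar> * \<bar>snd (clamp (-R, -R) (R, R) p)\<bar>
        \<le> \<epsilon> * R + \<epsilon> * R"
      using close that clamp_box_bounds[OF \<open>0 \<le> R\<close>, of p] by (intro add_mono mult_mono) auto
    from order_trans[OF state_field_control_diff this] show ?thesis
      unfolding G_def G0_def by (simp add: mult_ac)
  qed
  have "norm (x t - (f t, m t)) \<le> 2 * (2 * \<epsilon> * R) * T * exp ((2 * Lc + 1) * T)" if "t \<in> {0..T}" for t
    by (rule integral_equation_stability[where G=G and G0=G0,
          OF lipschitz \<open>0 \<le> Lc\<close> \<open>0 \<le> T\<close> x x_eq y y_eq G_G0 that])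
  moreover have "2 * (2 * \<epsilon> * R) * T * exp ((2 * Lc + 1) * T) = C * \<epsilon>"
    by (simp add: C Lc_def)
  ultimately have x_near: "norm (x t - (f t, m t)) \<le> C * \<epsilon>" if "t \<in> {0..T}" for t
    using that by metis
  have near: "\<bar>fst (x t) - f t\<bar> \<le> C * \<epsilon> \<and> \<bar>snd (x t) - m t\<bar> \<le> C * \<epsilon>" if "t \<in> {0..T}" for t
    using order_trans[OF abs_fst_le_norm x_near[OF that]] order_trans[OF abs_snd_le_norm x_near[OF that]]
    by simp
  have x_box: "\<forall>s\<in>{0..T}. \<bar>fst (x s)\<bar> \<le> R \<and> \<bar>snd (x s)\<bar> \<le> R"
    using fm near \<open>C * \<epsilon> \<le> 1\<close> by fastforce
  have "is_state \<beta> \<delta> K T f0 m0 \<zeta>1 \<zeta>2 (\<lambda>s. fst (x s)) (\<lambda>s. snd (x s))"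
    unfolding is_state_iff_clamped_integral_equation[OF x_box] using x x_eq by (simp add: G_def)
  with near show ?thesis
    by (intro exI[of _ "\<lambda>s. fst (x s)"] exI[of _ "\<lambda>s. snd (x s)"]) simp
qed

lemma perturbed_state_exists:
  assumes "0 \<le> \<beta>" "0 \<le> \<delta>" "0 < K" "0 \<le> T"
    and state: "is_state \<beta> \<delta> K T f0 m0 \<eta>1 \<eta>2 f m"
  obtains C e0 where "0 \<le> C" "0 < e0" "C * e0 \<le> 1"
    and "\<And>\<epsilon> \<zeta>1 \<zeta>2. 0 < \<epsilon> \<Longrightarrow> \<epsilon> \<le> e0 \<Longrightarrow> admissible T \<zeta>1 \<Longrightarrow> admissible T \<zeta>2 \<Longrightarrow>
      (\<And>t. t \<in> {0..T} \<Longrightarrow> \<bar>\<zeta>1 t - \<eta>1 t\<bar> \<le> \<epsilon> \<and> \<bar>\<zeta>2 t - \<eta>2 t\<bar> \<le> \<epsilon>) \<Longrightarrow>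
      \<exists>f' m'. is_state \<beta> \<delta> K T f0 m0 \<zeta>1 \<zeta>2 f' m' \<and>
        (\<forall>t\<in>{0..T}. \<bar>f' t - f t\<bar> \<le> C * \<epsilon> \<and> \<bar>m' t - m t\<bar> \<le> C * \<epsilon>)"
proof -
  have "continuous_on {0..T} (\<lambda>s. max \<bar>f s\<bar> \<bar>m s\<bar>)"
    using state unfolding is_state_def by (auto intro!: continuous_intros)
  then obtain B where "0 \<le> B" and B: "\<And>s. s \<in> {0..T} \<Longrightarrow> \<bar>max \<bar>f s\<bar> \<bar>m s\<bar>\<bar> \<le> B"
    using bounded_measurable_on_boundE[OF bounded_measurable_on_continuous] by blast
  define R where "R = B + 1"
  have "0 \<le> R" using \<open>0 \<le> B\<close> by (simp add: R_def)
  have "\<bar>f s\<bar> \<le> R - 1 \<and> \<bar>m s\<bar> \<le> R - 1" if "s \<in> {0..T}" for s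
    using order_trans[OF abs_ge_self B[OF that]] by (simp add: R_def)
  then have fm: "\<forall>s\<in>{0..T}. \<bar>f s\<bar> \<le> R - 1 \<and> \<bar>m s\<bar> \<le> R - 1"
    by blast
  note in_box = perturbed_state_in_box[OF assms(1-4) \<open>0 \<le> R\<close> state fm]
  define C where "C = 4 * R * T * exp ((2 * (4 * (\<beta> / 2 * (R + 4 * R\<^sup>2 / K) + \<delta> + 1)) + 1) * T)"
  have "0 \<le> C" using \<open>0 \<le> R\<close> \<open>0 \<le> T\<close> by (simp add: C_def)
  show ?thesis
  proof (rule that[of C "1 / (C + 1)"])
    show "0 \<le> C" "0 < 1 / (C + 1)" "C * (1 / (C + 1)) \<le> 1"
      using \<open>0 \<le> C\<close> by (auto simp: field_simps)
  next
    fix \<epsilon> \<zeta>1 \<zeta>2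
    assume \<epsilon>: "0 < \<epsilon>" "\<epsilon> \<le> 1 / (C + 1)" and \<zeta>: "admissible T \<zeta>1" "admissible T \<zeta>2"
      and close: "\<And>t. t \<in> {0..T} \<Longrightarrow> \<bar>\<zeta>1 t - \<eta>1 t\<bar> \<le> \<epsilon> \<and> \<bar>\<zeta>2 t - \<eta>2 t\<bar> \<le> \<epsilon>"
    have "C * \<epsilon> \<le> 1"
      using \<epsilon> \<open>0 \<le> C\<close> by (simp add: field_simps)
    then show "\<exists>f' m'. is_state \<beta> \<delta> K T f0 m0 \<zeta>1 \<zeta>2 f' m' \<and>
        (\<forall>t\<in>{0..T}. \<bar>f' t - f t\<bar> \<le> C * \<epsilon> \<and> \<bar>m' t - m t\<bar> \<le> C * \<epsilon>)"
      using close by (intro in_box[OF \<zeta> _ C_def]) auto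
  qed
qed

lemma adjoint_pairing_integral_eq_0:
  assumes adm: "admissible T \<eta>1" "admissible T \<eta>2" "admissible T \<zeta>1" "admissible T \<zeta>2"
    and state: "is_state \<beta> \<delta> K T f0 m0 \<eta>1 \<eta>2 f m" and state': "is_state \<beta> \<delta> K T f0 m0 \<zeta>1 \<zeta>2 f' m'"
    and l: "continuous_on {0..T} l1" "continuous_on {0..T} l2" "l1 T = 0" "l2 T = 0"
    and l1_eq: "\<And>t. t \<in> {0..T} \<Longrightarrow>
      ((\<lambda>s. adj1 \<beta> \<delta> K (\<eta>1 s) (f s) (m s) (l1 s) (l2 s)) has_integral (l1 T - l1 t)) {t..T}"
    and l2_eq: "\<And>t. t \<in> {0..T} \<Longrightarrow>
      ((\<lambda>s. adj2 \<beta> \<delta> K (\<eta>2 s) (f s) (m s) (l1 s) (l2 s)) has_integral (l2 T - l2 t)) {t..T}"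
  shows "integral {0..T} (\<lambda>s.
      (adj1 \<beta> \<delta> K (\<eta>1 s) (f s) (m s) (l1 s) (l2 s) * (f' s - f s)
        + l1 s * (rhs_f \<beta> \<delta> K (\<zeta>1 s) (f' s) (m' s) - rhs_f \<beta> \<delta> K (\<eta>1 s) (f s) (m s)))
    + (adj2 \<beta> \<delta> K (\<eta>2 s) (f s) (m s) (l1 s) (l2 s) * (m' s - m s)
        + l2 s * (rhs_m \<beta> \<delta> K (\<zeta>2 s) (f' s) (m' s) - rhs_m \<beta> \<delta> K (\<eta>2 s) (f s) (m s)))) = 0"
proof -
  have f: "continuous_on {0..T} f" "continuous_on {0..T} m"
    and f_eq: "\<And>t. t \<in> {0..T} \<Longrightarrow> ((\<lambda>s. rhs_f \<beta> \<delta> K (\<eta>1 s) (f s) (m s)) has_integral f t - f0) {0..t}"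
      "\<And>t. t \<in> {0..T} \<Longrightarrow> ((\<lambda>s. rhs_m \<beta> \<delta> K (\<eta>2 s) (f s) (m s)) has_integral m t - m0) {0..t}"
    using state unfolding is_state_def by auto
  have f': "continuous_on {0..T} f'" "continuous_on {0..T} m'"
    and f'_eq: "\<And>t. t \<in> {0..T} \<Longrightarrow> ((\<lambda>s. rhs_f \<beta> \<delta> K (\<zeta>1 s) (f' s) (m' s)) has_integral f' t - f0) {0..t}"
      "\<And>t. t \<in> {0..T} \<Longrightarrow> ((\<lambda>s. rhs_m \<beta> \<delta> K (\<zeta>2 s) (f' s) (m' s)) has_integral m' t - m0) {0..t}"
    using state' unfolding is_state_def by auto
  note bm = adm[THEN admissible_imp_bounded_measurable_on] f[THEN bounded_measurable_on_continuous]
    f'[THEN bounded_measurable_on_continuous] l(1,2)[THEN bounded_measurable_on_continuous]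
  have adj: "bounded_measurable_on {0..T} (\<lambda>s. adj1 \<beta> \<delta> K (\<eta>1 s) (f s) (m s) (l1 s) (l2 s))"
      "bounded_measurable_on {0..T} (\<lambda>s. adj2 \<beta> \<delta> K (\<eta>2 s) (f s) (m s) (l1 s) (l2 s))"
    by (intro bounded_measurable_on_adj bm)+
  have rhs: "bounded_measurable_on {0..T} (\<lambda>s. rhs_f \<beta> \<delta> K (\<zeta>1 s) (f' s) (m' s) - rhs_f \<beta> \<delta> K (\<eta>1 s) (f s) (m s))"
      "bounded_measurable_on {0..T} (\<lambda>s. rhs_m \<beta> \<delta> K (\<zeta>2 s) (f' s) (m' s) - rhs_m \<beta> \<delta> K (\<eta>2 s) (f s) (m s))"
    by (intro bounded_measurable_on_diff bounded_measurable_on_rhs bm)+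
  have "integral {0..T} (\<lambda>s. adj1 \<beta> \<delta> K (\<eta>1 s) (f s) (m s) (l1 s) (l2 s) * (f' s - f s)
        + l1 s * (rhs_f \<beta> \<delta> K (\<zeta>1 s) (f' s) (m' s) - rhs_f \<beta> \<delta> K (\<eta>1 s) (f s) (m s))) = 0"
  proof (rule integral_pairing_primitives_eq_0[OF adj(1) rhs(1)])
    show "continuous_on {0..T} (\<lambda>s. f' s - f s)" by (intro continuous_intros f f')
    show "((\<lambda>s. rhs_f \<beta> \<delta> K (\<zeta>1 s) (f' s) (m' s) - rhs_f \<beta> \<delta> K (\<eta>1 s) (f s) (m s)) has_integral f' t - f t) {0..t}"
      if "t \<in> {0..T}" for t
      using has_integral_diff[OF f'_eq(1) f_eq(1), OF that that] by simp
    show "((\<lambda>s. adj1 \<beta> \<delta> K (\<eta>1 s) (f s) (m s) (l1 s) (l2 s)) has_integral - l1 t) {t..T}"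
      if "t \<in> {0..T}" for t
      using l1_eq[OF that] l(3) by simp
  qed (rule l(1))
  moreover have "integral {0..T} (\<lambda>s. adj2 \<beta> \<delta> K (\<eta>2 s) (f s) (m s) (l1 s) (l2 s) * (m' s - m s)
        + l2 s * (rhs_m \<beta> \<delta> K (\<zeta>2 s) (f' s) (m' s) - rhs_m \<beta> \<delta> K (\<eta>2 s) (f s) (m s))) = 0"
  proof (rule integral_pairing_primitives_eq_0[OF adj(2) rhs(2)])
    show "continuous_on {0..T} (\<lambda>s. m' s - m s)" by (intro continuous_intros f f')
    show "((\<lambda>s. rhs_m \<beta> \<delta> K (\<zeta>2 s) (f' s) (m' s) - rhs_m \<beta> \<delta> K (\<eta>2 s) (f s) (m s)) has_integral m' t - m t) {0..t}"
      if "t \<in> {0..T}" for t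
      using has_integral_diff[OF f'_eq(2) f_eq(2), OF that that] by simp
    show "((\<lambda>s. adj2 \<beta> \<delta> K (\<eta>2 s) (f s) (m s) (l1 s) (l2 s)) has_integral - l2 t) {t..T}"
      if "t \<in> {0..T}" for t
      using l2_eq[OF that] l(4) by simp
  qed (rule l(2))
  moreover have "bounded_measurable_on {0..T} (\<lambda>s. adj1 \<beta> \<delta> K (\<eta>1 s) (f s) (m s) (l1 s) (l2 s) * (f' s - f s)
        + l1 s * (rhs_f \<beta> \<delta> K (\<zeta>1 s) (f' s) (m' s) - rhs_f \<beta> \<delta> K (\<eta>1 s) (f s) (m s)))"
      "bounded_measurable_on {0..T} (\<lambda>s. adj2 \<beta> \<delta> K (\<eta>2 s) (f s) (m s) (l1 s) (l2 s) * (m' s - m s)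
        + l2 s * (rhs_m \<beta> \<delta> K (\<zeta>2 s) (f' s) (m' s) - rhs_m \<beta> \<delta> K (\<eta>2 s) (f s) (m s)))"
    by (intro bounded_measurable_on_intros adj rhs bm)+
  ultimately show ?thesis
    by (simp add: integral_add bounded_measurable_on_integrable)
qed

section \<open>The optimality condition\<close>

text \<open>The pointwise maximiser of the Hamiltonian \<open>H\<^sub>4\<close> over the control interval \<open>[0, 1]\<close>.\<close>
definition projected_control :: "(real \<Rightarrow> real) \<Rightarrow> (real \<Rightarrow> real) \<Rightarrow> real \<Rightarrow> real" where
  "projected_control x l t = min 1 (max 0 (- x t * l t))"

lemma projected_control_range: "0 \<le> projected_control x l t \<and> projected_control x l t \<le> 1"
  by (simp add: projected_control_def)

lemma continuous_on_projected_control: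
  "continuous_on S x \<Longrightarrow> continuous_on S l \<Longrightarrow> continuous_on S (projected_control x l)"
  unfolding projected_control_def by (intro continuous_intros)

lemma bounded_measurable_on_control_gap:
  assumes "continuous_on {0..T} f" "continuous_on {0..T} m" "continuous_on {0..T} l1" "continuous_on {0..T} l2"
    and "admissible T \<eta>1" "admissible T \<eta>2"
  shows "bounded_measurable_on {0..T} (\<lambda>t. (projected_control f l1 t - \<eta>1 t)\<^sup>2 + (projected_control m l2 t - \<eta>2 t)\<^sup>2)"
proof -
  have "bounded_measurable_on {0..T} (projected_control f l1)" "bounded_measurable_on {0..T} (projected_control m l2)"
    by (intro bounded_measurable_on_continuous continuous_on_projected_control assms)+
  with assms(5,6)[THEN admissible_imp_bounded_measurable_on] show ?thesis
    by (intro bounded_measurable_on_add bounded_measurable_on_power2 bounded_measurable_on_diff)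
qed

lemma admissible_convex_step:
  assumes "admissible T \<eta>" "continuous_on {0..T} p" "\<And>t. 0 \<le> p t \<and> p t \<le> 1" "0 \<le> \<epsilon>" "\<epsilon> \<le> 1"
  shows "admissible T (\<lambda>t. \<eta> t + \<epsilon> * (p t - \<eta> t))"
    and "\<And>t. t \<in> {0..T} \<Longrightarrow> \<bar>\<eta> t + \<epsilon> * (p t - \<eta> t) - \<eta> t\<bar> \<le> \<epsilon>"
proof -
  have \<eta>: "\<eta> \<in> borel_measurable (lebesgue_on {0..T})" "\<And>t. t \<in> {0..T} \<Longrightarrow> 0 \<le> \<eta> t \<and> \<eta> t \<le> 1"
    using assms(1) unfolding admissible_iff by auto
  have "bounded_measurable_on {0..T} (\<lambda>t. \<eta> t + \<epsilon> * (p t - \<eta> t))"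
    using assms(1)[THEN admissible_imp_bounded_measurable_on] bounded_measurable_on_continuous[OF assms(2)]
    by (intro bounded_measurable_on_add bounded_measurable_on_mult bounded_measurable_on_diff
        bounded_measurable_on_const)
  moreover have "0 \<le> \<eta> t + \<epsilon> * (p t - \<eta> t) \<and> \<eta> t + \<epsilon> * (p t - \<eta> t) \<le> 1" if "t \<in> {0..T}" for t
    using \<eta>(2)[OF that] assms(3)[of t] assms(4,5) by (intro convex_comb_in_unit_interval) auto
  ultimately show "admissible T (\<lambda>t. \<eta> t + \<epsilon> * (p t - \<eta> t))"
    unfolding admissible_iff bounded_measurable_on_def by blast
  show "\<bar>\<eta> t + \<epsilon> * (p t - \<eta> t) - \<eta> t\<bar> \<le> \<epsilon>" if "t \<in> {0..T}" for t
  proof -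
    have "\<bar>p t - \<eta> t\<bar> \<le> 1"
      using \<eta>(2)[OF that] assms(3)[of t] unfolding abs_le_iff by linarith
    then show ?thesis
      using assms(4) by (simp add: abs_mult mult_left_le)
  qed
qed

lemma J4_variation_lower_bound:
  fixes \<epsilon> C B L :: real
  assumes "0 \<le> \<beta>" "0 < K" "0 \<le> T" "0 < \<epsilon>" "\<epsilon> \<le> 1"
    and adm: "admissible T \<eta>1" "admissible T \<eta>2" "admissible T \<zeta>1" "admissible T \<zeta>2"
    and state: "is_state \<beta> \<delta> K T f0 m0 \<eta>1 \<eta>2 f m"
    and l: "continuous_on {0..T} l1" "continuous_on {0..T} l2" "l1 T = 0" "l2 T = 0"
    and l1_eq: "\<And>t. t \<in> {0..T} \<Longrightarrow>
      ((\<lambda>s. adj1 \<beta> \<delta> K (\<eta>1 s) (f s) (m s) (l1 s) (l2 s)) has_integral (l1 T - l1 t)) {t..T}"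
    and l2_eq: "\<And>t. t \<in> {0..T} \<Longrightarrow>
      ((\<lambda>s. adj2 \<beta> \<delta> K (\<eta>2 s) (f s) (m s) (l1 s) (l2 s)) has_integral (l2 T - l2 t)) {t..T}"
    and \<zeta>: "\<And>t. \<zeta>1 t = \<eta>1 t + \<epsilon> * (projected_control f l1 t - \<eta>1 t)"
      "\<And>t. \<zeta>2 t = \<eta>2 t + \<epsilon> * (projected_control m l2 t - \<eta>2 t)"
    and state': "is_state \<beta> \<delta> K T f0 m0 \<zeta>1 \<zeta>2 f' m'"
    and near: "\<And>t. t \<in> {0..T} \<Longrightarrow> \<bar>f' t - f t\<bar> \<le> C * \<epsilon> \<and> \<bar>m' t - m t\<bar> \<le> C * \<epsilon>" "C * \<epsilon> \<le> 1"
    and bound: "\<And>t. t \<in> {0..T} \<Longrightarrow> \<bar>f t\<bar> \<le> B \<and> \<bar>m t\<bar> \<le> B \<and> \<bar>l1 t\<bar> \<le> L \<and> \<bar>l2 t\<bar> \<le> L"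
  shows "\<epsilon> / 2 * integral {0..T} (\<lambda>t. (projected_control f l1 t - \<eta>1 t)\<^sup>2 + (projected_control m l2 t - \<eta>2 t)\<^sup>2)
      - T * (2 * L * (\<beta> / 2 * (1 + (6 * B + 2) / K) * C\<^sup>2 + C) * \<epsilon>\<^sup>2)
    \<le> J4 T \<zeta>1 \<zeta>2 f' m' - J4 T \<eta>1 \<eta>2 f m"
proof -
  define h1 where "h1 t = projected_control f l1 t - \<eta>1 t" for t
  define h2 where "h2 t = projected_control m l2 t - \<eta>2 t" for t
  define C3 where "C3 = 2 * L * (\<beta> / 2 * (1 + (6 * B + 2) / K) * C\<^sup>2 + C)"
  define j where "j e1 e2 x y t = - (x t + y t) - ((e1 t)\<^sup>2 + (e2 t)\<^sup>2) / 2"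
    for e1 e2 x y :: "real \<Rightarrow> real" and t
  define pairing where "pairing s =
      (adj1 \<beta> \<delta> K (\<eta>1 s) (f s) (m s) (l1 s) (l2 s) * (f' s - f s)
        + l1 s * (rhs_f \<beta> \<delta> K (\<zeta>1 s) (f' s) (m' s) - rhs_f \<beta> \<delta> K (\<eta>1 s) (f s) (m s)))
    + (adj2 \<beta> \<delta> K (\<eta>2 s) (f s) (m s) (l1 s) (l2 s) * (m' s - m s)
        + l2 s * (rhs_m \<beta> \<delta> K (\<zeta>2 s) (f' s) (m' s) - rhs_m \<beta> \<delta> K (\<eta>2 s) (f s) (m s)))" for s
  have f: "continuous_on {0..T} f" "continuous_on {0..T} m" "continuous_on {0..T} f'" "continuous_on {0..T} m'"
    using state state' unfolding is_state_def by auto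
  note bm = adm[THEN admissible_imp_bounded_measurable_on] f[THEN bounded_measurable_on_continuous]
    l(1,2)[THEN bounded_measurable_on_continuous]
  have "integral {0..T} pairing = 0"
    unfolding pairing_def by (rule adjoint_pairing_integral_eq_0[OF adm state state' l l1_eq l2_eq])
  have pointwise: "\<epsilon> / 2 * ((h1 s)\<^sup>2 + (h2 s)\<^sup>2) - C3 * \<epsilon>\<^sup>2 \<le> (j \<zeta>1 \<zeta>2 f' m' s - j \<eta>1 \<eta>2 f m s) + pairing s"
    if s: "s \<in> {0..T}" for s
  proof -
    have "0 \<le> \<eta>1 s" "\<eta>1 s \<le> 1" "0 \<le> \<eta>2 s" "\<eta>2 s \<le> 1"
      using adm(1,2) s unfolding admissible_def by auto
    then have "\<epsilon> / 2 * ((h1 s)\<^sup>2 + (h2 s)\<^sup>2) - C3 * \<epsilon>\<^sup>2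
      \<le> \<epsilon> * ((- f s * l1 s - \<eta>1 s) * h1 s + (- m s * l2 s - \<eta>2 s) * h2 s) - \<epsilon>\<^sup>2 * ((h1 s)\<^sup>2 + (h2 s)\<^sup>2) / 2
       + l1 s * (\<beta> / 2 * growth_remainder K (f s) (m s) (f' s - f s) (m' s - m s) - \<epsilon> * h1 s * (f' s - f s))
       + l2 s * (\<beta> / 2 * growth_remainder K (f s) (m s) (f' s - f s) (m' s - m s) - \<epsilon> * h2 s * (m' s - m s))"
      unfolding C3_def using assms(1,2,4,5) near(1)[OF s] near(2) bound[OF s]
      by (intro hamiltonian_variation_lower_bound) (auto simp: h1_def h2_def projected_control_def)
    also have "\<dots> = (j \<zeta>1 \<zeta>2 f' m' s - j \<eta>1 \<eta>2 f m s) + pairing s"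
      using hamiltonian_variation_eq[where ?e1.0="\<eta>1 s" and ?e2.0="\<eta>2 s" and ?h1.0="h1 s" and ?h2.0="h2 s"
          and \<epsilon>=\<epsilon> and f="f s" and m="m s" and f'="f' s" and m'="m' s" and ?l1.0="l1 s" and ?l2.0="l2 s"
          and \<beta>=\<beta> and \<delta>=\<delta> and K=K] \<open>0 < K\<close>
      by (simp add: j_def pairing_def \<zeta> h1_def h2_def add.assoc)
    finally show ?thesis .
  qed
  have bm_q: "bounded_measurable_on {0..T} (\<lambda>s. (h1 s)\<^sup>2 + (h2 s)\<^sup>2)"
    unfolding h1_def h2_def using f(1,2) l(1,2) adm(1,2) by (rule bounded_measurable_on_control_gap)
  have bm_j: "bounded_measurable_on {0..T} (j \<zeta>1 \<zeta>2 f' m')" "bounded_measurable_on {0..T} (j \<eta>1 \<eta>2 f m)"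
    unfolding j_def by (intro bounded_measurable_on_intros bm)+
  have bm_pairing: "bounded_measurable_on {0..T} pairing"
    unfolding pairing_def by (intro bounded_measurable_on_intros bounded_measurable_on_adj bounded_measurable_on_rhs bm)+
  have "\<epsilon> / 2 * integral {0..T} (\<lambda>s. (h1 s)\<^sup>2 + (h2 s)\<^sup>2) - T * (C3 * \<epsilon>\<^sup>2)
      \<le> integral {0..T} (\<lambda>s. (j \<zeta>1 \<zeta>2 f' m' s - j \<eta>1 \<eta>2 f m s) + pairing s)"
    using bm_j bm_pairing \<open>0 \<le> T\<close> pointwise
    by (intro integral_ge_affine_lower_bound[OF bm_q] bounded_measurable_on_integrable
        bounded_measurable_on_add bounded_measurable_on_diff)
  also have "\<dots> = J4 T \<zeta>1 \<zeta>2 f' m' - J4 T \<eta>1 \<eta>2 f m"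
    using \<open>integral {0..T} pairing = 0\<close> bm_j bm_pairing
    by (simp add: J4_def j_def[abs_def] integral_add integral_diff bounded_measurable_on_integrable
        bounded_measurable_on_diff)
  finally show ?thesis
    by (simp add: C3_def h1_def h2_def)
qed

lemma integral_projected_control_gap_nonpos:
  assumes "0 \<le> \<beta>" "0 \<le> \<delta>" "0 < K" "0 \<le> T"
    and adm: "admissible T \<eta>1" "admissible T \<eta>2"
    and state: "is_state \<beta> \<delta> K T f0 m0 \<eta>1 \<eta>2 f m"
    and optimal: "\<forall>\<zeta>1 \<zeta>2 f' m'. admissible T \<zeta>1 \<and> admissible T \<zeta>2 \<and> is_state \<beta> \<delta> K T f0 m0 \<zeta>1 \<zeta>2 f' m' \<longrightarrow>
      J4 T \<zeta>1 \<zeta>2 f' m' \<le> J4 T \<eta>1 \<eta>2 f m"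
    and l: "continuous_on {0..T} l1" "continuous_on {0..T} l2" "l1 T = 0" "l2 T = 0"
    and l1_eq: "\<And>t. t \<in> {0..T} \<Longrightarrow>
      ((\<lambda>s. adj1 \<beta> \<delta> K (\<eta>1 s) (f s) (m s) (l1 s) (l2 s)) has_integral (l1 T - l1 t)) {t..T}"
    and l2_eq: "\<And>t. t \<in> {0..T} \<Longrightarrow>
      ((\<lambda>s. adj2 \<beta> \<delta> K (\<eta>2 s) (f s) (m s) (l1 s) (l2 s)) has_integral (l2 T - l2 t)) {t..T}"
  shows "integral {0..T} (\<lambda>t. (projected_control f l1 t - \<eta>1 t)\<^sup>2 + (projected_control m l2 t - \<eta>2 t)\<^sup>2) \<le> 0"
proof -
  have f: "continuous_on {0..T} f" "continuous_on {0..T} m"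
    using state unfolding is_state_def by auto
  obtain C e0 where C: "0 \<le> C" "0 < e0" "C * e0 \<le> 1"
    and perturb: "\<And>\<epsilon> \<zeta>1 \<zeta>2. 0 < \<epsilon> \<Longrightarrow> \<epsilon> \<le> e0 \<Longrightarrow> admissible T \<zeta>1 \<Longrightarrow> admissible T \<zeta>2 \<Longrightarrow>
      (\<And>t. t \<in> {0..T} \<Longrightarrow> \<bar>\<zeta>1 t - \<eta>1 t\<bar> \<le> \<epsilon> \<and> \<bar>\<zeta>2 t - \<eta>2 t\<bar> \<le> \<epsilon>) \<Longrightarrow>
      \<exists>f' m'. is_state \<beta> \<delta> K T f0 m0 \<zeta>1 \<zeta>2 f' m' \<and>
        (\<forall>t\<in>{0..T}. \<bar>f' t - f t\<bar> \<le> C * \<epsilon> \<and> \<bar>m' t - m t\<bar> \<le> C * \<epsilon>)"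
    using perturbed_state_exists[OF assms(1-4) state] by blast
  have "continuous_on {0..T} (\<lambda>t. max (max \<bar>f t\<bar> \<bar>m t\<bar>) (max \<bar>l1 t\<bar> \<bar>l2 t\<bar>))"
    by (intro continuous_intros f l)
  then obtain M where "0 \<le> M" and M: "\<And>t. t \<in> {0..T} \<Longrightarrow> \<bar>max (max \<bar>f t\<bar> \<bar>m t\<bar>) (max \<bar>l1 t\<bar> \<bar>l2 t\<bar>)\<bar> \<le> M"
    using bounded_measurable_on_boundE[OF bounded_measurable_on_continuous] by blast
  then have bound: "\<bar>f t\<bar> \<le> M \<and> \<bar>m t\<bar> \<le> M \<and> \<bar>l1 t\<bar> \<le> M \<and> \<bar>l2 t\<bar> \<le> M" if "t \<in> {0..T}" for t
    using order_trans[OF abs_ge_self M[OF that]] by simp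
  define C3 where "C3 = 2 * M * (\<beta> / 2 * (1 + (6 * M + 2) / K) * C\<^sup>2 + C)"
  have "0 \<le> C3"
    unfolding C3_def using \<open>0 \<le> M\<close> C assms(1-3) by (intro mult_nonneg_nonneg add_nonneg_nonneg) auto
  define q where "q t = (projected_control f l1 t - \<eta>1 t)\<^sup>2 + (projected_control m l2 t - \<eta>2 t)\<^sup>2" for t
  have "integral {0..T} q \<le> (2 * T * C3) * \<epsilon>" if "0 < \<epsilon>" "\<epsilon> \<le> min e0 1" for \<epsilon>
  proof -
    define \<zeta>1 where "\<zeta>1 t = \<eta>1 t + \<epsilon> * (projected_control f l1 t - \<eta>1 t)" for t
    define \<zeta>2 where "\<zeta>2 t = \<eta>2 t + \<epsilon> * (projected_control m l2 t - \<eta>2 t)" for t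
    have "\<epsilon> \<le> e0" "\<epsilon> \<le> 1" using that by simp_all
    then have "C * \<epsilon> \<le> 1"
      using order_trans[OF mult_left_mono[OF \<open>\<epsilon> \<le> e0\<close> C(1)] C(3)] by simp
    have pc: "continuous_on {0..T} (projected_control f l1)" "continuous_on {0..T} (projected_control m l2)"
      by (intro continuous_on_projected_control f l)+
    note step1 = admissible_convex_step[OF adm(1) pc(1) projected_control_range, of \<epsilon>, folded \<zeta>1_def]
    note step2 = admissible_convex_step[OF adm(2) pc(2) projected_control_range, of \<epsilon>, folded \<zeta>2_def]
    have adm': "admissible T \<zeta>1" "admissible T \<zeta>2"
      using step1(1) step2(1) \<open>0 < \<epsilon>\<close> \<open>\<epsilon> \<le> 1\<close> by simp_all
    have "\<And>t. t \<in> {0..T} \<Longrightarrow> \<bar>\<zeta>1 t - \<eta>1 t\<bar> \<le> \<epsilon> \<and> \<bar>\<zeta>2 t - \<eta>2 t\<bar> \<le> \<epsilon>"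
      using step1(2) step2(2) \<open>0 < \<epsilon>\<close> \<open>\<epsilon> \<le> 1\<close> by simp
    from perturb[OF \<open>0 < \<epsilon>\<close> \<open>\<epsilon> \<le> e0\<close> adm' this]
    obtain f' m' where state': "is_state \<beta> \<delta> K T f0 m0 \<zeta>1 \<zeta>2 f' m'"
      and near: "\<And>t. t \<in> {0..T} \<Longrightarrow> \<bar>f' t - f t\<bar> \<le> C * \<epsilon> \<and> \<bar>m' t - m t\<bar> \<le> C * \<epsilon>"
      by blast
    have "\<epsilon> / 2 * integral {0..T} q - T * (C3 * \<epsilon>\<^sup>2) \<le> J4 T \<zeta>1 \<zeta>2 f' m' - J4 T \<eta>1 \<eta>2 f m"
      unfolding q_def C3_def
      by (rule J4_variation_lower_bound[OF assms(1,3,4) \<open>0 < \<epsilon>\<close> \<open>\<epsilon> \<le> 1\<close> adm adm' state l l1_eq l2_eq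
            \<zeta>1_def \<zeta>2_def state' near \<open>C * \<epsilon> \<le> 1\<close> bound])
    also have "\<dots> \<le> 0"
      using optimal[rule_format, OF conjI[OF adm'(1) conjI[OF adm'(2) state']]] by simp
    finally have "\<epsilon> * integral {0..T} q \<le> \<epsilon> * ((2 * T * C3) * \<epsilon>)"
      by (simp add: power2_eq_square algebra_simps)
    with \<open>0 < \<epsilon>\<close> show ?thesis
      by simp
  qed
  then show ?thesis
    unfolding q_def[abs_def] using C \<open>0 \<le> T\<close> \<open>0 \<le> C3\<close>
    by (intro le_0_if_le_mult_small[where ?e0.0="min e0 1" and C="2 * T * C3"]) auto
qed

theorem mainTheorem9:
  fixes \<beta> \<delta> K T f0 m0 :: real
    and \<eta>1s \<eta>2s fs ms :: "real \<Rightarrow> real"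
  assumes "0 < \<beta>" "\<beta> < 1" "0 < \<delta>" "\<delta> < 1" "0 < K" "0 < T"
    and "admissible T \<eta>1s" "admissible T \<eta>2s"
    and "is_state \<beta> \<delta> K T f0 m0 \<eta>1s \<eta>2s fs ms"
    and optimal: "\<forall>\<eta>1 \<eta>2 f m. admissible T \<eta>1 \<and> admissible T \<eta>2 \<and>
                    is_state \<beta> \<delta> K T f0 m0 \<eta>1 \<eta>2 f m \<longrightarrow>
                    J4 T \<eta>1 \<eta>2 f m \<le> J4 T \<eta>1s \<eta>2s fs ms"
  shows "\<exists>l1 l2 :: real \<Rightarrow> real.
           continuous_on {0..T} l1 \<and> continuous_on {0..T} l2 \<and>
           l1 T = 0 \<and> l2 T = 0 \<and>
           (\<forall>t\<in>{0..T}. ((\<lambda>s. adj1 \<beta> \<delta> K (\<eta>1s s) (fs s) (ms s) (l1 s) (l2 s))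
                          has_integral (l1 T - l1 t)) {t..T}) \<and>
           (\<forall>t\<in>{0..T}. ((\<lambda>s. adj2 \<beta> \<delta> K (\<eta>2s s) (fs s) (ms s) (l1 s) (l2 s))
                          has_integral (l2 T - l2 t)) {t..T}) \<and>
           (AE t in lebesgue. t \<in> {0..T} \<longrightarrow>
              \<eta>1s t = min 1 (max 0 (- fs t * l1 t)) \<and>
              \<eta>2s t = min 1 (max 0 (- ms t * l2 t)))"
proof -
  have "0 \<le> T" using \<open>0 < T\<close> by simp
  have f: "continuous_on {0..T} fs" "continuous_on {0..T} ms"
    using assms(9) unfolding is_state_def by auto
  obtain l1 l2 where l: "continuous_on {0..T} l1" "continuous_on {0..T} l2" "l1 T = 0" "l2 T = 0"
    and l1_eq: "\<And>t. t \<in> {0..T} \<Longrightarrow>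
      ((\<lambda>s. adj1 \<beta> \<delta> K (\<eta>1s s) (fs s) (ms s) (l1 s) (l2 s)) has_integral (l1 T - l1 t)) {t..T}"
    and l2_eq: "\<And>t. t \<in> {0..T} \<Longrightarrow>
      ((\<lambda>s. adj2 \<beta> \<delta> K (\<eta>2s s) (fs s) (ms s) (l1 s) (l2 s)) has_integral (l2 T - l2 t)) {t..T}"
    using adjoint_exists[where \<beta>=\<beta> and \<delta>=\<delta> and K=K, OF \<open>0 \<le> T\<close> f assms(7,8)] by blast
  define q where "q t = (projected_control fs l1 t - \<eta>1s t)\<^sup>2 + (projected_control ms l2 t - \<eta>2s t)\<^sup>2" for t
  have gap: "integral {0..T} q \<le> 0"
    unfolding q_def using assms(1,3,5) \<open>0 \<le> T\<close>
    by (intro integral_projected_control_gap_nonpos[OF _ _ _ _ assms(7-9) optimal l l1_eq l2_eq]) auto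
  have "bounded_measurable_on {0..T} q"
    unfolding q_def using f l(1,2) assms(7,8) by (rule bounded_measurable_on_control_gap)
  from AE_eq_0_if_integral_nonpos[OF this _ gap]
  have "AE t in lebesgue. t \<in> {0..T} \<longrightarrow> q t = 0"
    by (simp add: q_def)
  then have "AE t in lebesgue. t \<in> {0..T} \<longrightarrow>
      \<eta>1s t = min 1 (max 0 (- fs t * l1 t)) \<and> \<eta>2s t = min 1 (max 0 (- ms t * l2 t))"
    by eventually_elim (auto simp: q_def projected_control_def sum_power2_eq_zero_iff)
  with l l1_eq l2_eq show ?thesis
    by (intro exI[of _ l1] exI[of _ l2]) simp
qed

end
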